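(* Let $\mathcal{T}=(\mathcal{V},\mathcal{E})$ obey the LC-PF model and covariance assumption of the context, with $\Omega_p(c,c)+\Omega_q(c,c)>0$ for every non-root node $c$. Let $\mathcal{M}\subset\mathcal{V}$ be a set of non-root ("missing") nodes, each of degree at most $2$ in $\mathcal{T}$, and let $\mathcal{O}=\mathcal{V}\setminus\mathcal{M}$ be the observed nodes. Let $\mathcal{T}_{\mathcal{M}}$ be the minimum weight spanning tree of the complete graph on $\mathcal{O}$ with edge weights $\phi_{ab}$. Then every edge of $\mathcal{T}$ joining two observed nodes is an edge of $\mathcal{T}_{\mathcal{M}}$. Every other (spurious) edge of $\mathcal{T}_{\mathcal{M}}$ joins two observed nodes that are separated in $\mathcal{T}$ by missing nodes, i.e. whose connecting path in $\mathcal{T}$ has all interior nodes in $\mathcal{M}$.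
   Context: $\mathcal{T}=(\mathcal{V},\mathcal{E})$ is a tree with a distinguished root node (the substation) of degree one. Each edge $(ab)$ has resistance $r_{ab}>0$ and reactance $x_{ab}>0$. Let $H_{1/r}$ (resp. $H_{1/x}$) be the weighted Laplacian of $\mathcal{T}$ with edge weights $1/r_{ab}$ (resp. $1/x_{ab}$), with the root row and column removed. Non-root nodes have random injections $p_a,q_a$. The LC-PF model gives the voltage magnitude deviations $v=H_{1/r}^{-1}p+H_{1/x}^{-1}q$ and phases $\theta=H_{1/x}^{-1}p-H_{1/r}^{-1}q$ at non-root nodes; the root voltage is constant. Covariance assumption: with $\Omega_p,\Omega_q$ the covariances of $p,q$ and $\Omega_{pq}=\mathbb{E}[(p-\mathbb{E}p)(q-\mathbb{E}q)^T]=\Omega_{qp}^T$, for distinct non-root $a,b$ we have $\Omega_p(a,b)=\Omega_q(a,b)=\Omega_{qp}(a,b)=0$, and $\Omega_{qp}(a,a)\ge0$. Define $\phi_{ab}=\mathbb{E}[((v_a-\mathbb{E}v_a)-(v_b-\mathbb{E}v_b))^2]$. *)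

theory Defs
  imports "HOL-Probability.Probability"
begin

text \<open>An undirected graph on a vertex set V is a symmetric, irreflexive relation
  E within V x V; each undirected edge {a,b} is represented by both (a,b) and (b,a).\<close>

definition ugraph :: "'v set \<Rightarrow> ('v \<times> 'v) set \<Rightarrow> bool" where
  "ugraph V E \<longleftrightarrow> E \<subseteq> V \<times> V \<and> sym E \<and> (\<forall>a. (a, a) \<notin> E)"

definition connected_on :: "'v set \<Rightarrow> ('v \<times> 'v) set \<Rightarrow> bool" where
  "connected_on V E \<longleftrightarrow> (\<forall>a\<in>V. \<forall>b\<in>V. (a, b) \<in> E\<^sup>*)"

text \<open>A tree: finite, nonempty, connected, with |V|-1 undirected edges
  (each counted twice as ordered pairs).\<close>
definition is_tree :: "'v set \<Rightarrow> ('v \<times> 'v) set \<Rightarrow> bool" where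
  "is_tree V E \<longleftrightarrow> finite V \<and> V \<noteq> {} \<and> ugraph V E \<and> connected_on V E
     \<and> card E = 2 * (card V - 1)"

definition degree :: "('v \<times> 'v) set \<Rightarrow> 'v \<Rightarrow> nat" where
  "degree E a = card {b. (a, b) \<in> E}"

definition is_path :: "('v \<times> 'v) set \<Rightarrow> 'v list \<Rightarrow> bool" where
  "is_path E xs \<longleftrightarrow> xs \<noteq> [] \<and> distinct xs \<and>
     (\<forall>i. Suc i < length xs \<longrightarrow> (xs ! i, xs ! Suc i) \<in> E)"

definition separated_by :: "('v \<times> 'v) set \<Rightarrow> 'v set \<Rightarrow> 'v \<Rightarrow> 'v \<Rightarrow> bool" where
  "separated_by E S a b \<longleftrightarrow> (\<exists>xs. is_path E xs \<and> hd xs = a \<and> last xs = b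
     \<and> set (butlast (tl xs)) \<subseteq> S)"

text \<open>Minimum weight spanning tree of the complete graph on O, weights w a b
  (summing over ordered pairs counts each undirected edge twice, which does not
  change the minimisers).\<close>
definition is_mst :: "'v set \<Rightarrow> ('v \<Rightarrow> 'v \<Rightarrow> real) \<Rightarrow> ('v \<times> 'v) set \<Rightarrow> bool" where
  "is_mst Ob w F \<longleftrightarrow> is_tree Ob F \<and>
     (\<forall>F'. is_tree Ob F' \<longrightarrow> (\<Sum>(a, b)\<in>F. w a b) \<le> (\<Sum>(a, b)\<in>F'. w a b))"

text \<open>Weighted Laplacian entries (weights wt a b on edges); restricting to the
  non-rt nodes removes the rt row and column.\<close>
definition lap :: "('v \<times> 'v) set \<Rightarrow> ('v \<Rightarrow> 'v \<Rightarrow> real) \<Rightarrow> 'v \<Rightarrow> 'v \<Rightarrow> real" where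
  "lap E wt a b = (if a = b then (\<Sum>c\<in>{c. (a, c) \<in> E}. wt a c)
                   else if (a, b) \<in> E then - wt a b else 0)"

definition mat_inv_on :: "'v set \<Rightarrow> ('v \<Rightarrow> 'v \<Rightarrow> real) \<Rightarrow> 'v \<Rightarrow> 'v \<Rightarrow> real" where
  "mat_inv_on N H = (THE G. (\<forall>a\<in>N. \<forall>b\<in>N. (\<Sum>c\<in>N. H a c * G c b) = (if a = b then 1 else 0))
                         \<and> (\<forall>a b. a \<notin> N \<or> b \<notin> N \<longrightarrow> G a b = 0))"

definition covar :: "'w measure \<Rightarrow> ('w \<Rightarrow> real) \<Rightarrow> ('w \<Rightarrow> real) \<Rightarrow> real" where
  "covar M X Y = (\<integral>\<omega>. (X \<omega> - (\<integral>\<omega>'. X \<omega>' \<partial>M)) * (Y \<omega> - (\<integral>\<omega>'. Y \<omega>' \<partial>M)) \<partial>M)"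

text \<open>Voltage magnitude deviation v = H_{1/r}^{-1} p + H_{1/x}^{-1} q at non-rt nodes;
  the rt voltage is constant (taken as 0, which does not affect phi).\<close>
definition volt :: "'v set \<Rightarrow> 'v \<Rightarrow> ('v \<times> 'v) set \<Rightarrow> ('v \<Rightarrow> 'v \<Rightarrow> real) \<Rightarrow> ('v \<Rightarrow> 'v \<Rightarrow> real)
     \<Rightarrow> ('v \<Rightarrow> 'w \<Rightarrow> real) \<Rightarrow> ('v \<Rightarrow> 'w \<Rightarrow> real) \<Rightarrow> 'v \<Rightarrow> 'w \<Rightarrow> real" where
  "volt V rt E r x p q a \<omega> =
     (if a \<in> V - {rt} then
        (\<Sum>b\<in>V - {rt}. mat_inv_on (V - {rt}) (lap E (\<lambda>c d. 1 / r c d)) a b * p b \<omega>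
                        + mat_inv_on (V - {rt}) (lap E (\<lambda>c d. 1 / x c d)) a b * q b \<omega>)
      else 0)"

definition phi :: "'v set \<Rightarrow> 'v \<Rightarrow> ('v \<times> 'v) set \<Rightarrow> ('v \<Rightarrow> 'v \<Rightarrow> real) \<Rightarrow> ('v \<Rightarrow> 'v \<Rightarrow> real)
     \<Rightarrow> 'w measure \<Rightarrow> ('v \<Rightarrow> 'w \<Rightarrow> real) \<Rightarrow> ('v \<Rightarrow> 'w \<Rightarrow> real) \<Rightarrow> 'v \<Rightarrow> 'v \<Rightarrow> real" where
  "phi V rt E r x M p q a b =
     (let va = volt V rt E r x p q a; vb = volt V rt E r x p q b in
      \<integral>\<omega>. ((va \<omega> - (\<integral>\<omega>'. va \<omega>' \<partial>M)) - (vb \<omega> - (\<integral>\<omega>'. vb \<omega>' \<partial>M)))\<^sup>2 \<partial>M)"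

end

theory Submission
  imports Defs
begin

text \<open>
  Root the tree and index each edge by its lower endpoint w, the edge from w to its parent.
  The inverse of the reduced Laplacian with admittances 1/z is then the Green function
  G_z(u, d), the total impedance of the edges shared by the root paths of u and d. Hence
  v_a - v_b is the sum over d of (G_r(a, d) - G_r(b, d)) p_d + (G_x(a, d) - G_x(b, d)) q_d,
  and since injections at different nodes are uncorrelated, phi_ab is a sum over d of
  quadratic forms with nonnegative coefficients in these two differences.

  For fixed d, G_z(a, d) - G_z(b, d) is a signed sum of impedances over the edges of the
  a-b path that lie on the root path of d, and all of them carry the same sign. So if the
  tree path of a' and b' is a proper, equally oriented subpath of that of a and b, then
  phi_a'b' < phi_ab. Consequently a tree edge is strictly the cheapest pair crossing the cut
  it defines, and an interior node c of the a-b path gives phi_ac, phi_cb < phi_ab. The cycle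
  property of a minimum spanning tree F (an edge of F is no heavier than any pair that F
  joins through it) turns these two inequalities into the two claims.
\<close>

section \<open>Spanning trees\<close>

lemma ugraph_finite: "finite V \<Longrightarrow> ugraph V E \<Longrightarrow> finite E"
  unfolding ugraph_def by (meson finite_SigmaI finite_subset)

lemma rtrancl_remove_edge:
  assumes "(c, v) \<in> F\<^sup>*"
  shows "(c, v) \<in> (F - {(c, d), (d, c)})\<^sup>* \<or> (d, v) \<in> (F - {(c, d), (d, c)})\<^sup>*"
  using assms
proof (induction rule: rtrancl_induct)
  case base
  then show ?case by simp
next
  case (step y z)
  show ?case
  proof (cases "(y, z) \<in> {(c, d), (d, c)}")
    case True
    then show ?thesis by auto
  next
    case False
    then have "(y, z) \<in> F - {(c, d), (d, c)}" using step by auto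
    with step.IH show ?thesis by (meson rtrancl.rtrancl_into_rtrancl)
  qed
qed

lemma relpow_avoid_edge_or_reach:
  assumes "(a, z) \<in> R ^^ j"
  shows "(a, z) \<in> (R - {(u, v), (v, u)})\<^sup>* \<or> (\<exists>i\<le>j. (a, v) \<in> R ^^ i)"
  using assms
proof (induction j arbitrary: z)
  case 0
  then show ?case by simp
next
  case (Suc j)
  then obtain y where y: "(a, y) \<in> R ^^ j" "(y, z) \<in> R" by (auto elim: relpow_Suc_E)
  from Suc.IH[OF y(1)] show ?case
  proof
    assume avoid: "(a, y) \<in> (R - {(u, v), (v, u)})\<^sup>*"
    show ?case
    proof (cases "(y, z) \<in> {(u, v), (v, u)}")
      case True
      then have "z = v \<or> y = v" by auto
      then show ?thesis using Suc.prems y(1) le_SucI by blast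
    next
      case False
      then show ?thesis using avoid y by (meson Diff_iff rtrancl.rtrancl_into_rtrancl)
    qed
  next
    assume "\<exists>i\<le>j. (a, v) \<in> R ^^ i"
    then show ?case by (meson le_SucI)
  qed
qed

text \<open>Strong induction on the length of the walk: if the part of the walk before its last
  crossing edge already passes through that edge, a shorter walk reaches the endpoint.\<close>
lemma rtrancl_crossing_edge:
  assumes "(a, v) \<in> F\<^sup>*" "a \<notin> S" "v \<in> S"
  shows "\<exists>x y. (x, y) \<in> F \<and> x \<notin> S \<and> y \<in> S \<and> (a, x) \<in> (F - {(x, y), (y, x)})\<^sup>*
           \<and> (y, v) \<in> (F - {(x, y), (y, x)})\<^sup>*"
proof -
  obtain k where "(a, v) \<in> F ^^ k" using assms(1) rtrancl_imp_relpow by blast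
  then show ?thesis using assms(3)
  proof (induction k arbitrary: v rule: less_induct)
    case (less k)
    show ?case
    proof (cases k)
      case 0
      then show ?thesis using less.prems assms(2) by auto
    next
      case (Suc j)
      then obtain u where u: "(a, u) \<in> F ^^ j" "(u, v) \<in> F"
        using less.prems(1) by (auto elim: relpow_Suc_E)
      show ?thesis
      proof (cases "u \<in> S")
        case True
        from less.IH[of j u] obtain x y where xy: "(x, y) \<in> F" "x \<notin> S" "y \<in> S"
          "(a, x) \<in> (F - {(x, y), (y, x)})\<^sup>*" "(y, u) \<in> (F - {(x, y), (y, x)})\<^sup>*"
          using Suc u(1) True by blast
        have "(u, v) \<in> F - {(x, y), (y, x)}" using xy(2) True less.prems(2) u(2) by auto
        then have "(y, v) \<in> (F - {(x, y), (y, x)})\<^sup>*"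
          using xy(5) by (meson rtrancl.rtrancl_into_rtrancl)
        then show ?thesis using xy by blast
      next
        case False
        from relpow_avoid_edge_or_reach[OF u(1), of u v] show ?thesis
        proof
          assume "(a, u) \<in> (F - {(u, v), (v, u)})\<^sup>*"
          then show ?thesis using u(2) False less.prems(2) by blast
        next
          assume "\<exists>i\<le>j. (a, v) \<in> F ^^ i"
          then obtain i where "i \<le> j" "(a, v) \<in> F ^^ i" by blast
          then show ?thesis using less.IH[of i v] Suc less.prems(2) by simp
        qed
      qed
    qed
  qed
qed

definition parent_edges :: "'v set \<Rightarrow> 'v \<Rightarrow> ('v \<Rightarrow> 'v) \<Rightarrow> ('v \<times> 'v) set" where
  "parent_edges V r par = (\<lambda>v. (v, par v)) ` (V - {r}) \<union> (\<lambda>v. (par v, v)) ` (V - {r})"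

lemma card_parent_edges:
  fixes dep :: "'v \<Rightarrow> nat"
  assumes "finite V" "r \<in> V" "\<And>v. v \<in> V - {r} \<Longrightarrow> dep v = Suc (dep (par v))"
  shows "card (parent_edges V r par) = 2 * (card V - 1)"
proof -
  have inj1: "inj_on (\<lambda>v. (v, par v)) (V - {r})" and inj2: "inj_on (\<lambda>v. (par v, v)) (V - {r})"
    by (auto simp: inj_on_def)
  have "(\<lambda>v. (v, par v)) ` (V - {r}) \<inter> (\<lambda>v. (par v, v)) ` (V - {r}) = {}"
  proof -
    have False if "u \<in> V - {r}" "v \<in> V - {r}" "(u, par u) = (par v, v)" for u v
    proof -
      from that(3) have "par u = v" "par v = u" by auto
      with assms(3)[OF that(1)] assms(3)[OF that(2)] show False by simp
    qed
    then show ?thesis by blast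
  qed
  then have "card (parent_edges V r par)
      = card ((\<lambda>v. (v, par v)) ` (V - {r})) + card ((\<lambda>v. (par v, v)) ` (V - {r}))"
    unfolding parent_edges_def using assms(1) by (simp add: card_Un_disjoint)
  also have "\<dots> = 2 * (card V - 1)"
    using card_image[OF inj1] card_image[OF inj2] assms(1,2) by simp
  finally show ?thesis .
qed

text \<open>A breadth-first search tree: dep is the distance from r.\<close>
lemma connected_parent_function:
  assumes ug: "ugraph V E" and con: "connected_on V E" and r: "r \<in> V"
  obtains par and dep :: "'v \<Rightarrow> nat"
  where "dep r = 0" "\<And>v. v \<in> V - {r} \<Longrightarrow> par v \<in> V \<and> (v, par v) \<in> E \<and> dep v = Suc (dep (par v))"
proof -
  define dep where "dep v = (LEAST n. (r, v) \<in> E ^^ n)" for v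
  have dep_in: "(r, v) \<in> E ^^ dep v" if "v \<in> V" for v
  proof -
    have "\<exists>n. (r, v) \<in> E ^^ n"
      using con r that unfolding connected_on_def by (meson rtrancl_imp_relpow)
    then show ?thesis unfolding dep_def by (rule LeastI_ex)
  qed
  have dep_le: "dep v \<le> n" if "(r, v) \<in> E ^^ n" for v n
    unfolding dep_def using that by (rule Least_le)
  have "\<exists>u. u \<in> V \<and> (v, u) \<in> E \<and> dep v = Suc (dep u)" if v: "v \<in> V - {r}" for v
  proof -
    have h: "(r, v) \<in> E ^^ dep v" using dep_in v by auto
    then obtain m where m: "dep v = Suc m" using v by (cases "dep v") auto
    with h obtain u where u: "(r, u) \<in> E ^^ m" "(u, v) \<in> E" by (auto elim: relpow_Suc_E)
    have uV: "u \<in> V" using u(2) ug unfolding ugraph_def by auto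
    have "dep v \<le> Suc (dep u)" using dep_le relpow_Suc_I[OF dep_in[OF uV] u(2)] by blast
    then have "dep v = Suc (dep u)" using dep_le[OF u(1)] m by simp
    moreover have "(v, u) \<in> E" using u(2) ug unfolding ugraph_def by (auto dest: symD)
    ultimately show ?thesis using uV by blast
  qed
  then have "\<forall>v\<in>V - {r}. \<exists>u. u \<in> V \<and> (v, u) \<in> E \<and> dep v = Suc (dep u)" by blast
  moreover have "dep r = 0" using dep_le[of r 0] by simp
  ultimately show ?thesis using that by metis
qed

lemma connected_card_edges_ge:
  assumes fin: "finite V" and ug: "ugraph V E" and con: "connected_on V E" and ne: "V \<noteq> {}"
  shows "2 * (card V - 1) \<le> card E"
proof -
  obtain r where r: "r \<in> V" using ne by auto
  obtain par and dep :: "'a \<Rightarrow> nat"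
    where "dep r = 0"
      and pd: "\<And>v. v \<in> V - {r} \<Longrightarrow> par v \<in> V \<and> (v, par v) \<in> E \<and> dep v = Suc (dep (par v))"
    using connected_parent_function[OF ug con r] by blast
  have "parent_edges V r par \<subseteq> E"
    using pd ug unfolding parent_edges_def ugraph_def by (auto dest: symD)
  then have "card (parent_edges V r par) \<le> card E"
    using ugraph_finite[OF fin ug] by (simp add: card_mono)
  then show ?thesis using card_parent_edges[of V r dep par] fin r pd by simp
qed

lemma is_tree_bridge:
  assumes T: "is_tree Ob F" and cd: "(c, d) \<in> F"
  shows "(c, d) \<notin> (F - {(c, d), (d, c)})\<^sup>*"
proof
  let ?F0 = "F - {(c, d), (d, c)}"
  assume cd0: "(c, d) \<in> ?F0\<^sup>*"
  from T have fin: "finite Ob" and ug: "ugraph Ob F" and con: "connected_on Ob F"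
    and cardF: "card F = 2 * (card Ob - 1)" and ne: "Ob \<noteq> {}"
    unfolding is_tree_def by blast+
  have symF0: "sym ?F0" using ug unfolding ugraph_def sym_def by auto
  have cdO: "c \<in> Ob" "d \<in> Ob" "c \<noteq> d" "(d, c) \<in> F"
    using ug cd unfolding ugraph_def by (auto dest: symD)
  have "(c, v) \<in> ?F0\<^sup>*" if "v \<in> Ob" for v
    using rtrancl_remove_edge[of c v F d] con cdO that cd0 unfolding connected_on_def
    by (meson rtrancl_trans)
  then have "connected_on Ob ?F0" unfolding connected_on_def
    using symD[OF sym_rtrancl[OF symF0]] by (meson rtrancl_trans)
  moreover have "ugraph Ob ?F0" using ug unfolding ugraph_def sym_def by auto
  ultimately have "2 * (card Ob - 1) \<le> card ?F0" using connected_card_edges_ge fin ne by blast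
  moreover have "card ?F0 = card F - 2"
    using cd cdO ugraph_finite[OF fin ug] by (simp add: card_Diff_subset)
  moreover have "card {(c, d), (d, c)} \<le> card F"
    using cd cdO ugraph_finite[OF fin ug] by (intro card_mono) auto
  ultimately show False using cardF cdO(3) by simp
qed

lemma exchange_edge_new:
  fixes F :: "('v \<times> 'v) set" and c d :: 'v
  defines "F0 \<equiv> F - {(c, d), (d, c)}"
  assumes T: "is_tree Ob F" and cd: "(c, d) \<in> F"
    and uc: "(u, c) \<in> F0\<^sup>*" and dv: "(d, v) \<in> F0\<^sup>*"
  shows "u \<noteq> v" "(u, v) \<notin> F0" "(v, u) \<notin> F0"
proof -
  have symF0: "sym F0"
    using T unfolding is_tree_def ugraph_def sym_def F0_def by auto
  have bridge: "(c, d) \<notin> F0\<^sup>*" using is_tree_bridge[OF T cd] unfolding F0_def .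
  show "u \<noteq> v"
    using bridge uc dv symD[OF sym_rtrancl[OF symF0]] by (meson rtrancl_trans)
  show uv: "(u, v) \<notin> F0"
    using bridge uc dv symD[OF sym_rtrancl[OF symF0]] by (meson rtrancl_trans r_into_rtrancl)
  then show "(v, u) \<notin> F0" using symF0 by (auto dest: symD)
qed

lemma is_tree_exchange:
  fixes F :: "('v \<times> 'v) set" and c d :: 'v
  defines "F0 \<equiv> F - {(c, d), (d, c)}"
  assumes T: "is_tree Ob F" and cd: "(c, d) \<in> F"
    and uc: "(u, c) \<in> F0\<^sup>*" and dv: "(d, v) \<in> F0\<^sup>*"
  shows "is_tree Ob (insert (u, v) (insert (v, u) F0))"
  unfolding is_tree_def
proof (intro conjI)
  let ?F' = "insert (u, v) (insert (v, u) F0)"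
  from T have fin: "finite Ob" and ug: "ugraph Ob F" and con: "connected_on Ob F"
    and cardF: "card F = 2 * (card Ob - 1)" and ne: "Ob \<noteq> {}"
    unfolding is_tree_def by blast+
  note new = exchange_edge_new[OF T cd uc[unfolded F0_def] dv[unfolded F0_def], folded F0_def]
  have symF0: "sym F0" using ug unfolding ugraph_def sym_def F0_def by auto
  have cdO: "c \<in> Ob" "d \<in> Ob" "c \<noteq> d" "(d, c) \<in> F"
    using ug cd unfolding ugraph_def by (auto dest: symD)
  have F0O: "F0 \<subseteq> Ob \<times> Ob" using ug unfolding ugraph_def F0_def by auto
  have uO: "u \<in> Ob" using uc cdO(1) F0O by (cases rule: converse_rtranclE) auto
  have vO: "v \<in> Ob" using dv cdO(2) F0O by (cases rule: rtranclE) auto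
  show "finite Ob" "Ob \<noteq> {}" by fact+
  show "ugraph Ob ?F'"
    using ug uO vO new(1) unfolding ugraph_def F0_def sym_def by auto
  have sub: "F0\<^sup>* \<subseteq> ?F'\<^sup>*" by (rule rtrancl_mono) auto
  have "(v, u) \<in> ?F'" by simp
  then have "(d, c) \<in> ?F'\<^sup>*"
    using sub dv uc by (meson r_into_rtrancl rtrancl_trans subsetD)
  moreover have "(z, c) \<in> ?F'\<^sup>* \<or> (z, d) \<in> ?F'\<^sup>*" if "z \<in> Ob" for z
    using rtrancl_remove_edge[of c z F d] con cdO(1) that sub symD[OF sym_rtrancl[OF symF0]]
    unfolding connected_on_def F0_def by blast
  ultimately have "(z, c) \<in> ?F'\<^sup>*" if "z \<in> Ob" for z
    using that by (meson rtrancl_trans)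
  moreover have "sym ?F'" using symF0 unfolding sym_def by auto
  ultimately show "connected_on Ob ?F'" unfolding connected_on_def
    using symD[OF sym_rtrancl] by (meson rtrancl_trans)
  have finF: "finite F" using ugraph_finite[OF fin ug] .
  have "card F0 = card F - 2"
    using cd cdO finF unfolding F0_def by (simp add: card_Diff_subset)
  moreover have "card {(c, d), (d, c)} \<le> card F"
    using cd cdO finF by (intro card_mono) auto
  moreover have "card ?F' = card F0 + 2"
    using new finF unfolding F0_def by simp
  ultimately show "card ?F' = 2 * (card Ob - 1)" using cardF cdO(3) by simp
qed

lemma mst_cycle_le:
  assumes mst: "is_mst Ob w F" and w_sym: "\<And>a b. w a b = w b a" and cd: "(c, d) \<in> F"
    and uc: "(u, c) \<in> (F - {(c, d), (d, c)})\<^sup>*" and dv: "(d, v) \<in> (F - {(c, d), (d, c)})\<^sup>*"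
  shows "w c d \<le> w u v"
proof -
  let ?F0 = "F - {(c, d), (d, c)}"
  have T: "is_tree Ob F" using mst unfolding is_mst_def by blast
  then have "(\<Sum>(a, b)\<in>F. w a b) \<le> (\<Sum>(a, b)\<in>insert (u, v) (insert (v, u) ?F0). w a b)"
    using mst is_tree_exchange[OF T cd uc dv] unfolding is_mst_def by blast
  moreover have "finite F" "c \<noteq> d" "(d, c) \<in> F"
    using T cd ugraph_finite unfolding is_tree_def ugraph_def by (auto dest: symD)
  then have "(\<Sum>(a, b)\<in>F. w a b) = (\<Sum>(a, b)\<in>insert (c, d) (insert (d, c) ?F0). w a b)"
    using cd by (intro sum.cong) auto
  ultimately show ?thesis
    using exchange_edge_new[OF T cd uc dv] w_sym[of u v] w_sym[of c d] \<open>finite F\<close> \<open>c \<noteq> d\<close>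
    by simp
qed

section \<open>Covariance of square integrable random variables\<close>

definition square_integrable :: "'a measure \<Rightarrow> ('a \<Rightarrow> real) \<Rightarrow> bool" where
  "square_integrable M f \<longleftrightarrow> f \<in> borel_measurable M \<and> integrable M (\<lambda>\<omega>. (f \<omega>)\<^sup>2)"

lemma abs_mult_le_sum_squares: "\<bar>(a::real) * b\<bar> \<le> a\<^sup>2 + b\<^sup>2"
  using sum_squares_bound[of a b] sum_squares_bound[of a "-b"]
    zero_le_power2[of a] zero_le_power2[of b]
  unfolding abs_le_iff by (simp add: mult.assoc)

lemma square_integrable_mult:
  assumes "square_integrable M f" "square_integrable M g"
  shows "integrable M (\<lambda>\<omega>. f \<omega> * g \<omega>)"
proof (rule Bochner_Integration.integrable_bound)
  show "integrable M (\<lambda>\<omega>. (f \<omega>)\<^sup>2 + (g \<omega>)\<^sup>2)"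
    using assms unfolding square_integrable_def by auto
  show "(\<lambda>\<omega>. f \<omega> * g \<omega>) \<in> borel_measurable M"
    using assms unfolding square_integrable_def by (intro borel_measurable_times) auto
  show "AE \<omega> in M. norm (f \<omega> * g \<omega>) \<le> norm ((f \<omega>)\<^sup>2 + (g \<omega>)\<^sup>2)"
    using abs_mult_le_sum_squares by (intro AE_I2) (simp add: abs_le_iff)
qed

lemma square_integrable_add:
  assumes "square_integrable M f" "square_integrable M g"
  shows "square_integrable M (\<lambda>\<omega>. f \<omega> + g \<omega>)"
proof -
  have "integrable M (\<lambda>\<omega>. (f \<omega>)\<^sup>2 + (g \<omega>)\<^sup>2 + 2 * (f \<omega> * g \<omega>))"
    using assms square_integrable_mult[OF assms] unfolding square_integrable_def by auto
  moreover have "(\<lambda>\<omega>. f \<omega> + g \<omega>) \<in> borel_measurable M"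
    using assms unfolding square_integrable_def by (intro borel_measurable_add) auto
  ultimately show ?thesis
    unfolding square_integrable_def by (simp add: power2_sum algebra_simps)
qed

lemma square_integrable_cmult:
  "square_integrable M f \<Longrightarrow> square_integrable M (\<lambda>\<omega>. c * f \<omega>)"
  unfolding square_integrable_def by (auto simp: power_mult_distrib)

lemma square_integrable_sum:
  assumes "\<And>i. i \<in> I \<Longrightarrow> square_integrable M (f i)"
  shows "square_integrable M (\<lambda>\<omega>. \<Sum>i\<in>I. f i \<omega>)"
  using assms
proof (induction I rule: infinite_finite_induct)
  case (insert i I)
  then show ?case using square_integrable_add[of M "f i" "\<lambda>\<omega>. \<Sum>i\<in>I. f i \<omega>"] by simp
qed (simp_all add: square_integrable_def)

lemma (in finite_measure) square_integrable_const: "square_integrable M (\<lambda>\<omega>. c)"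
  unfolding square_integrable_def by simp

lemma (in finite_measure) square_integrable_integrable:
  "square_integrable M f \<Longrightarrow> integrable M f"
  unfolding square_integrable_def using square_integrable_imp_integrable by blast

lemma covar_sym: "covar M f g = covar M g f"
  unfolding covar_def by (simp add: mult.commute)

lemma covar_self_nonneg: "0 \<le> covar M f f"
  unfolding covar_def by simp

lemma covar_cmult_left: "covar M (\<lambda>\<omega>. c * f \<omega>) h = c * covar M f h"
proof -
  have "covar M (\<lambda>\<omega>. c * f \<omega>) h
     = (\<integral>\<omega>. c * ((f \<omega> - (\<integral>\<omega>. f \<omega> \<partial>M)) * (h \<omega> - (\<integral>\<omega>. h \<omega> \<partial>M))) \<partial>M)"
    unfolding covar_def by (simp add: algebra_simps)
  then show ?thesis unfolding covar_def by simp
qed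

lemma (in finite_measure) covar_add_left:
  assumes f: "square_integrable M f" and g: "square_integrable M g" and h: "square_integrable M h"
  shows "covar M (\<lambda>\<omega>. f \<omega> + g \<omega>) h = covar M f h + covar M g h"
proof -
  let ?cf = "\<integral>\<omega>. f \<omega> \<partial>M" and ?cg = "\<integral>\<omega>. g \<omega> \<partial>M" and ?ch = "\<integral>\<omega>. h \<omega> \<partial>M"
  have centred: "square_integrable M (\<lambda>\<omega>. k \<omega> - c)" if "square_integrable M k" for k c
    using square_integrable_add[OF that square_integrable_const[of "-c"]] by simp
  have "integrable M f" "integrable M g"
    using f g square_integrable_integrable by blast+
  then have "covar M (\<lambda>\<omega>. f \<omega> + g \<omega>) h
      = (\<integral>\<omega>. (f \<omega> - ?cf) * (h \<omega> - ?ch) + (g \<omega> - ?cg) * (h \<omega> - ?ch) \<partial>M)"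
    unfolding covar_def by (simp add: algebra_simps)
  also have "\<dots> = covar M f h + covar M g h"
    unfolding covar_def using square_integrable_mult centred f g h
    by (intro Bochner_Integration.integral_add) blast+
  finally show ?thesis .
qed

lemma (in finite_measure) covar_sum_left:
  assumes "\<And>i. i \<in> I \<Longrightarrow> square_integrable M (f i)" "square_integrable M h"
  shows "covar M (\<lambda>\<omega>. \<Sum>i\<in>I. f i \<omega>) h = (\<Sum>i\<in>I. covar M (f i) h)"
  using assms
proof (induction I rule: infinite_finite_induct)
  case (insert i I)
  then show ?case
    using covar_add_left[of "f i" "\<lambda>\<omega>. \<Sum>i\<in>I. f i \<omega>" h] square_integrable_sum[of I M f] by simp
qed (simp_all add: covar_def)

lemma (in finite_measure) covar_bilinear:
  assumes "square_integrable M f" "square_integrable M g"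
    and "square_integrable M h" "square_integrable M k"
  shows "covar M (\<lambda>\<omega>. a * f \<omega> + b * g \<omega>) (\<lambda>\<omega>. c * h \<omega> + e * k \<omega>)
    = a * c * covar M f h + a * e * covar M f k + b * c * covar M g h + b * e * covar M g k"
proof -
  have left: "covar M (\<lambda>\<omega>. a * u \<omega> + b * v \<omega>) z = a * covar M u z + b * covar M v z"
    if "square_integrable M u" "square_integrable M v" "square_integrable M z" for a b u v z
    using covar_add_left[OF square_integrable_cmult[OF that(1)] square_integrable_cmult[OF that(2)]
        that(3)]
    by (simp add: covar_cmult_left)
  have right: "covar M u (\<lambda>\<omega>. c * h \<omega> + e * k \<omega>) = c * covar M u h + e * covar M u k"
    if "square_integrable M u" for u
    using left[OF assms(3,4) that] covar_sym by metis
  have "square_integrable M (\<lambda>\<omega>. c * h \<omega> + e * k \<omega>)"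
    using assms by (intro square_integrable_add square_integrable_cmult)
  then show ?thesis
    using left[OF assms(1,2)] right[OF assms(1)] right[OF assms(2)] by (simp add: algebra_simps)
qed

text \<open>The variance of u p + v q when p and q have variances P and Q and covariance R.\<close>
definition qform :: "real \<Rightarrow> real \<Rightarrow> real \<Rightarrow> real \<Rightarrow> real \<Rightarrow> real" where
  "qform P Q R u v = u\<^sup>2 * P + v\<^sup>2 * Q + 2 * u * v * R"

lemma qform_neg: "qform P Q R (- u) (- v) = qform P Q R u v"
  unfolding qform_def by simp

lemma qform_sign: "\<sigma> = 1 \<or> \<sigma> = -1 \<Longrightarrow> qform P Q R (\<sigma> * u) (\<sigma> * v) = qform P Q R u v"
  using qform_neg by auto

lemma qform_swap: "qform P Q R (a - b) (c - d) = qform P Q R (b - a) (d - c)"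
  using qform_neg[of P Q R "b - a" "d - c"] by simp

lemma qform_mono:
  assumes "0 \<le> u'" "u' \<le> u" "0 \<le> v'" "v' \<le> v" "0 \<le> P" "0 \<le> Q" "0 \<le> R"
  shows "qform P Q R u' v' \<le> qform P Q R u v"
proof -
  have "u'\<^sup>2 * P \<le> u\<^sup>2 * P" "v'\<^sup>2 * Q \<le> v\<^sup>2 * Q"
    using assms by (simp_all add: power_mono mult_right_mono)
  moreover have "2 * u' * v' * R \<le> 2 * u * v * R"
    using assms by (simp add: mult_mono mult_right_mono)
  ultimately show ?thesis unfolding qform_def by linarith
qed

lemma qform_strict_mono:
  assumes "0 \<le> u'" "u' < u" "0 \<le> v'" "v' < v" "0 \<le> P" "0 \<le> Q" "0 \<le> R" "0 < P + Q"
  shows "qform P Q R u' v' < qform P Q R u v"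
proof -
  have sq: "u'\<^sup>2 < u\<^sup>2" "v'\<^sup>2 < v\<^sup>2" using assms by (simp_all add: power_strict_mono)
  then have "u'\<^sup>2 * P \<le> u\<^sup>2 * P" "v'\<^sup>2 * Q \<le> v\<^sup>2 * Q"
    using assms by (simp_all add: mult_right_mono)
  moreover have "u'\<^sup>2 * P < u\<^sup>2 * P \<or> v'\<^sup>2 * Q < v\<^sup>2 * Q"
    using sq assms(5,6,8) by (cases "0 < P") simp_all
  moreover have "2 * u' * v' * R \<le> 2 * u * v * R"
    using assms by (simp add: mult_mono mult_right_mono)
  ultimately show ?thesis unfolding qform_def by linarith
qed

lemma (in finite_measure) covar_self_sum_uncorrelated:
  fixes p q :: "'i \<Rightarrow> 'a \<Rightarrow> real"
  assumes fin: "finite N"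
    and sq: "\<And>d. d \<in> N \<Longrightarrow> square_integrable M (p d) \<and> square_integrable M (q d)"
    and uncorr: "\<And>d e. d \<in> N \<Longrightarrow> e \<in> N \<Longrightarrow> d \<noteq> e \<Longrightarrow>
       covar M (p d) (p e) = 0 \<and> covar M (q d) (q e) = 0 \<and> covar M (q d) (p e) = 0"
  shows "covar M (\<lambda>\<omega>. \<Sum>d\<in>N. \<alpha> d * p d \<omega> + \<beta> d * q d \<omega>) (\<lambda>\<omega>. \<Sum>d\<in>N. \<alpha> d * p d \<omega> + \<beta> d * q d \<omega>)
    = (\<Sum>d\<in>N. qform (covar M (p d) (p d)) (covar M (q d) (q d)) (covar M (q d) (p d)) (\<alpha> d) (\<beta> d))"
    (is "_ = (\<Sum>d\<in>N. ?Q d)")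
proof -
  define Z where "Z d \<omega> = \<alpha> d * p d \<omega> + \<beta> d * q d \<omega>" for d \<omega>
  define X where "X = (\<lambda>\<omega>. \<Sum>d\<in>N. Z d \<omega>)"
  have sqZ: "square_integrable M (Z d)" if "d \<in> N" for d
    unfolding Z_def using sq[OF that] by (intro square_integrable_add square_integrable_cmult) auto
  have covZ: "covar M (Z e) (Z d) = (if e = d then ?Q d else 0)" if de: "d \<in> N" "e \<in> N" for d e
  proof -
    have expand: "covar M (Z e) (Z d)
        = \<alpha> e * \<alpha> d * covar M (p e) (p d) + \<alpha> e * \<beta> d * covar M (p e) (q d)
        + \<beta> e * \<alpha> d * covar M (q e) (p d) + \<beta> e * \<beta> d * covar M (q e) (q d)"
      unfolding Z_def using covar_bilinear sq[OF de(1)] sq[OF de(2)] by blast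
    show ?thesis
    proof (cases "e = d")
      case True
      have "covar M (p d) (q d) = covar M (q d) (p d)" by (rule covar_sym)
      then show ?thesis
        using expand True unfolding qform_def power2_eq_square by (simp add: algebra_simps)
    next
      case False
      have "covar M (p e) (q d) = covar M (q d) (p e)" by (rule covar_sym)
      then show ?thesis using expand False uncorr[OF de] uncorr[OF de(2,1)] by simp
    qed
  qed
  have "covar M X X = (\<Sum>d\<in>N. covar M (Z d) X)"
    unfolding X_def by (rule covar_sum_left[OF sqZ square_integrable_sum[OF sqZ]])
  also have "\<dots> = (\<Sum>d\<in>N. \<Sum>e\<in>N. covar M (Z e) (Z d))"
  proof (rule sum.cong[OF refl])
    fix d
    assume "d \<in> N"
    have "covar M (Z d) X = covar M X (Z d)" by (rule covar_sym)
    also have "\<dots> = (\<Sum>e\<in>N. covar M (Z e) (Z d))"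
      unfolding X_def by (rule covar_sum_left[OF sqZ sqZ[OF \<open>d \<in> N\<close>]])
    finally show "covar M (Z d) X = (\<Sum>e\<in>N. covar M (Z e) (Z d))" .
  qed
  also have "\<dots> = (\<Sum>d\<in>N. ?Q d)"
  proof (rule sum.cong[OF refl])
    fix d
    assume d: "d \<in> N"
    have "(\<Sum>e\<in>N. covar M (Z e) (Z d)) = (\<Sum>e\<in>N. if e = d then ?Q d else 0)"
      using covZ d by (intro sum.cong) auto
    then show "(\<Sum>e\<in>N. covar M (Z e) (Z d)) = ?Q d" using fin d by simp
  qed
  finally show ?thesis unfolding X_def Z_def .
qed

lemma integral_centered_diff_square:
  fixes X Y :: "'a \<Rightarrow> real"
  assumes "integrable M X" "integrable M Y"
  shows "(\<integral>\<omega>. ((X \<omega> - (\<integral>\<omega>'. X \<omega>' \<partial>M)) - (Y \<omega> - (\<integral>\<omega>'. Y \<omega>' \<partial>M)))\<^sup>2 \<partial>M)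
       = covar M (\<lambda>\<omega>. X \<omega> - Y \<omega>) (\<lambda>\<omega>. X \<omega> - Y \<omega>)"
proof -
  have "(\<integral>\<omega>. X \<omega> - Y \<omega> \<partial>M) = (\<integral>\<omega>. X \<omega> \<partial>M) - (\<integral>\<omega>. Y \<omega> \<partial>M)"
    using assms by simp
  then have centred: "(X \<omega> - (\<integral>\<omega>'. X \<omega>' \<partial>M)) - (Y \<omega> - (\<integral>\<omega>'. Y \<omega>' \<partial>M))
      = (X \<omega> - Y \<omega>) - (\<integral>\<omega>'. X \<omega>' - Y \<omega>' \<partial>M)" for \<omega>
    by simp
  show ?thesis unfolding covar_def power2_eq_square centred ..
qed

section \<open>Rooted trees\<close>

lemma right_inverse_eq_left_inverse:
  fixes H G G' :: "'v \<Rightarrow> 'v \<Rightarrow> real"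
  assumes fin: "finite N"
    and left: "\<And>a b. a \<in> N \<Longrightarrow> b \<in> N \<Longrightarrow> (\<Sum>c\<in>N. G a c * H c b) = (if a = b then 1 else 0)"
    and right: "\<And>a b. a \<in> N \<Longrightarrow> b \<in> N \<Longrightarrow> (\<Sum>c\<in>N. H a c * G' c b) = (if a = b then 1 else 0)"
    and u: "u \<in> N" and d: "d \<in> N"
  shows "G' u d = G u d"
proof -
  have "G' u d = (\<Sum>c\<in>N. if u = c then G' c d else 0)"
    using u fin by simp
  also have "\<dots> = (\<Sum>c\<in>N. (\<Sum>e\<in>N. G u e * H e c) * G' c d)"
    using left u by (intro sum.cong) auto
  also have "\<dots> = (\<Sum>c\<in>N. \<Sum>e\<in>N. G u e * (H e c * G' c d))"
    by (simp add: sum_distrib_right mult.assoc)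
  also have "\<dots> = (\<Sum>e\<in>N. \<Sum>c\<in>N. G u e * (H e c * G' c d))"
    by (rule sum.swap)
  also have "\<dots> = (\<Sum>e\<in>N. G u e * (\<Sum>c\<in>N. H e c * G' c d))"
    by (simp add: sum_distrib_left)
  also have "\<dots> = (\<Sum>e\<in>N. if e = d then G u e else 0)"
    using right d by (intro sum.cong) auto
  also have "\<dots> = G u d"
    using d fin by simp
  finally show ?thesis .
qed

lemma mat_inv_on_eqI:
  fixes H G :: "'v \<Rightarrow> 'v \<Rightarrow> real"
  assumes fin: "finite N"
    and right: "\<And>a b. a \<in> N \<Longrightarrow> b \<in> N \<Longrightarrow> (\<Sum>c\<in>N. H a c * G c b) = (if a = b then 1 else 0)"
    and left: "\<And>a b. a \<in> N \<Longrightarrow> b \<in> N \<Longrightarrow> (\<Sum>c\<in>N. G a c * H c b) = (if a = b then 1 else 0)"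
    and outside: "\<And>a b. a \<notin> N \<or> b \<notin> N \<Longrightarrow> G a b = 0"
  shows "mat_inv_on N H = G"
  unfolding mat_inv_on_def
proof (rule the_equality)
  show "(\<forall>a\<in>N. \<forall>b\<in>N. (\<Sum>c\<in>N. H a c * G c b) = (if a = b then 1 else 0))
      \<and> (\<forall>a b. a \<notin> N \<or> b \<notin> N \<longrightarrow> G a b = 0)"
    using right outside by blast
next
  fix G'
  assume G': "(\<forall>a\<in>N. \<forall>b\<in>N. (\<Sum>c\<in>N. H a c * G' c b) = (if a = b then 1 else 0))
      \<and> (\<forall>a b. a \<notin> N \<or> b \<notin> N \<longrightarrow> G' a b = 0)"
  show "G' = G"
  proof (intro ext)
    fix u d
    show "G' u d = G u d"
    proof (cases "u \<in> N \<and> d \<in> N")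
      case True
      show ?thesis
        by (rule right_inverse_eq_left_inverse[where G = G and H = H]) (use fin left G' True in auto)
    qed (use G' outside in auto)
  qed
qed

lemma is_path_single: "is_path E [x]"
  unfolding is_path_def by simp

lemma is_path_Cons:
  assumes "is_path E ys" "x \<notin> set ys" "(x, hd ys) \<in> E"
  shows "is_path E (x # ys)"
  unfolding is_path_def
proof (intro conjI allI impI)
  show "x # ys \<noteq> []" by simp
  show "distinct (x # ys)" using assms unfolding is_path_def by simp
  fix i
  assume "Suc i < length (x # ys)"
  then show "((x # ys) ! i, (x # ys) ! Suc i) \<in> E"
    using assms(1,3) unfolding is_path_def by (cases i) (auto simp: hd_conv_nth)
qed

lemma is_path_snoc:
  assumes "is_path E ys" "x \<notin> set ys" "(last ys, x) \<in> E"
  shows "is_path E (ys @ [x])"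
  unfolding is_path_def
proof (intro conjI allI impI)
  show "ys @ [x] \<noteq> []" by simp
  show "distinct (ys @ [x])" using assms unfolding is_path_def by simp
  fix i
  assume i: "Suc i < length (ys @ [x])"
  have ne: "ys \<noteq> []" using assms(1) unfolding is_path_def by simp
  show "((ys @ [x]) ! i, (ys @ [x]) ! Suc i) \<in> E"
  proof (cases "Suc i < length ys")
    case True
    then show ?thesis using assms(1) unfolding is_path_def by (simp add: nth_append)
  next
    case False
    then have "Suc i = length ys" "i = length ys - 1" using i by simp_all
    then show ?thesis using assms(3) ne by (simp add: nth_append last_conv_nth)
  qed
qed

lemma interior_neq_hd_last:
  assumes "distinct xs" "c \<in> set (butlast (tl xs))"
  shows "c \<noteq> hd xs \<and> c \<noteq> last xs \<and> c \<in> set xs"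
proof (cases xs)
  case Nil
  then show ?thesis using assms by simp
next
  case (Cons y ys)
  have ne: "ys \<noteq> []" using assms Cons by auto
  have c: "c \<in> set (butlast ys)" using assms Cons by simp
  have "ys = butlast ys @ [last ys]" using ne by simp
  then have "last ys \<notin> set (butlast ys)" using assms(1) Cons
    by (metis distinct.simps(2) distinct_append not_distinct_conv_prefix)
  then show ?thesis using Cons assms c ne in_set_butlastD by fastforce
qed

locale rooted_tree =
  fixes V :: "'v set" and E :: "('v \<times> 'v) set" and root :: 'v
    and par :: "'v \<Rightarrow> 'v" and dep :: "'v \<Rightarrow> nat"
  assumes finite_V: "finite V" and root_in_V: "root \<in> V"
    and par_root: "par root = root" and dep_root: "dep root = 0"
    and par_in_V: "\<And>v. v \<in> V \<Longrightarrow> v \<noteq> root \<Longrightarrow> par v \<in> V"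
    and dep_par: "\<And>v. v \<in> V \<Longrightarrow> v \<noteq> root \<Longrightarrow> dep v = Suc (dep (par v))"
    and edges_eq: "E = parent_edges V root par"
begin

definition ancestor :: "'v \<Rightarrow> 'v \<Rightarrow> bool" where
  "ancestor u v \<longleftrightarrow> (\<exists>k. (par ^^ k) v = u)"

lemma par_closed: "v \<in> V \<Longrightarrow> par v \<in> V"
  using par_in_V par_root root_in_V by (cases "v = root") auto

lemma funpow_par_closed: "v \<in> V \<Longrightarrow> (par ^^ k) v \<in> V"
  by (induction k) (auto simp: par_closed)

lemma funpow_par_root: "(par ^^ k) root = root"
  by (induction k) (auto simp: par_root)

lemma dep_funpow_par: "v \<in> V \<Longrightarrow> dep ((par ^^ k) v) = dep v - k"
proof (induction k)
  case 0
  then show ?case by simp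
next
  case (Suc k)
  let ?u = "(par ^^ k) v"
  show ?case
  proof (cases "?u = root")
    case True
    then show ?thesis using Suc par_root dep_root by simp
  next
    case False
    then show ?thesis using Suc dep_par[OF funpow_par_closed[OF Suc.prems] False] by simp
  qed
qed

lemma dep_eq_0_imp_root: "v \<in> V \<Longrightarrow> dep v = 0 \<Longrightarrow> v = root"
  using dep_par by force

lemma ancestor_refl: "ancestor v v"
  unfolding ancestor_def by (rule exI[of _ 0]) simp

lemma ancestor_par: "ancestor (par v) v"
  unfolding ancestor_def by (rule exI[of _ 1]) simp

lemma ancestor_in_V: "ancestor u v \<Longrightarrow> v \<in> V \<Longrightarrow> u \<in> V"
  unfolding ancestor_def using funpow_par_closed by blast

lemma root_ancestor:
  assumes "v \<in> V"
  shows "ancestor root v"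
proof -
  have "dep ((par ^^ dep v) v) = 0" using dep_funpow_par[OF assms] by simp
  then have "(par ^^ dep v) v = root" using dep_eq_0_imp_root funpow_par_closed[OF assms] by blast
  then show ?thesis unfolding ancestor_def by blast
qed

lemma ancestor_root_eq: "ancestor u root \<Longrightarrow> u = root"
  unfolding ancestor_def using funpow_par_root by auto

lemma ancestor_iff_par:
  assumes "v \<in> V" "v \<noteq> root"
  shows "ancestor w v \<longleftrightarrow> w = v \<or> ancestor w (par v)"
proof
  assume "ancestor w v"
  then obtain k where k: "(par ^^ k) v = w" unfolding ancestor_def by blast
  show "w = v \<or> ancestor w (par v)"
  proof (cases k)
    case 0
    then show ?thesis using k by simp
  next
    case (Suc k')
    then have "(par ^^ k') (par v) = w" using k by (simp add: funpow_Suc_right del: funpow.simps)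
    then show ?thesis unfolding ancestor_def by blast
  qed
next
  assume "w = v \<or> ancestor w (par v)"
  then show "ancestor w v"
  proof
    assume "ancestor w (par v)"
    then obtain k where "(par ^^ k) (par v) = w" unfolding ancestor_def by blast
    then have "(par ^^ Suc k) v = w" by (simp add: funpow_Suc_right del: funpow.simps)
    then show ?thesis unfolding ancestor_def by blast
  qed (simp add: ancestor_refl)
qed

lemma ancestor_trans:
  assumes "ancestor u v" "ancestor v w"
  shows "ancestor u w"
proof -
  obtain i j where "(par ^^ i) v = u" "(par ^^ j) w = v"
    using assms unfolding ancestor_def by blast
  then have "(par ^^ (i + j)) w = u" by (simp add: funpow_add)
  then show ?thesis unfolding ancestor_def by blast
qed

lemma ancestor_dep_le: "ancestor u v \<Longrightarrow> v \<in> V \<Longrightarrow> dep u \<le> dep v"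
  unfolding ancestor_def using dep_funpow_par by auto

lemma ancestor_dep_eq:
  assumes "ancestor u v" "v \<in> V" "dep u = dep v"
  shows "u = v"
proof -
  obtain k where k: "(par ^^ k) v = u" using assms(1) unfolding ancestor_def by blast
  show ?thesis
  proof (cases k)
    case 0
    then show ?thesis using k by simp
  next
    case (Suc k')
    then have "dep v = 0" using dep_funpow_par[OF assms(2), of k] k assms(3) by simp
    then have "v = root" using dep_eq_0_imp_root assms(2) by blast
    then show ?thesis using k funpow_par_root by simp
  qed
qed

lemma ancestor_antisym:
  assumes "ancestor u v" "ancestor v u" "v \<in> V"
  shows "u = v"
  using ancestor_dep_eq[OF assms(1,3)] ancestor_dep_le[OF assms(1,3)]
    ancestor_dep_le[OF assms(2) ancestor_in_V[OF assms(1,3)]]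
  by simp

lemma ancestor_linear:
  assumes "ancestor u w" "ancestor v w"
  shows "ancestor u v \<or> ancestor v u"
proof -
  have chain: "ancestor y x" if "(par ^^ m) w = x" "(par ^^ n) w = y" "m \<le> n" for x y m n
  proof -
    have "(par ^^ (n - m + m)) w = y" using that by simp
    then have "(par ^^ (n - m)) x = y" using that(1) by (simp add: funpow_add)
    then show ?thesis unfolding ancestor_def by blast
  qed
  obtain i j where "(par ^^ i) w = u" "(par ^^ j) w = v"
    using assms unfolding ancestor_def by blast
  then show ?thesis using chain[of i u j v] chain[of j v i u] by linarith
qed

lemma not_ancestor_par: "v \<in> V \<Longrightarrow> v \<noteq> root \<Longrightarrow> \<not> ancestor v (par v)"
  using ancestor_dep_le[of v "par v"] dep_par par_in_V by fastforce

lemma child_ancestor_exists: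
  assumes "ancestor a b" "a \<noteq> b" "b \<in> V"
  shows "\<exists>c. c \<in> V \<and> c \<noteq> root \<and> par c = a \<and> ancestor c b"
  using assms
proof (induction "dep b" arbitrary: b rule: less_induct)
  case less
  have b: "b \<noteq> root" using less.prems ancestor_root_eq by blast
  have ap: "ancestor a (par b)" using ancestor_iff_par less.prems b by blast
  show ?case
  proof (cases "a = par b")
    case True
    then show ?thesis using b less.prems ancestor_refl by blast
  next
    case False
    have "dep (par b) < dep b" using dep_par[OF less.prems(3) b] by simp
    from less.hyps[OF this ap False par_in_V[OF less.prems(3) b]] obtain c
      where "c \<in> V" "c \<noteq> root" "par c = a" "ancestor c (par b)" by blast
    then show ?thesis using ancestor_trans ancestor_par by blast
  qed
qed

lemma child_ancestor_unique:
  assumes "c1 \<in> V" "c1 \<noteq> root" "c2 \<in> V" "c2 \<noteq> root" "par c1 = par c2"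
    and "ancestor c1 b" "ancestor c2 b"
  shows "c1 = c2"
proof -
  have dep: "dep c1 = dep c2" using dep_par[OF assms(1,2)] dep_par[OF assms(3,4)] assms(5) by simp
  from ancestor_linear[OF assms(6,7)] show ?thesis
  proof
    assume "ancestor c1 c2"
    then show ?thesis using ancestor_dep_eq assms(3) dep by blast
  next
    assume "ancestor c2 c1"
    then show ?thesis using ancestor_dep_eq assms(1) dep by force
  qed
qed

lemma sum_children_ancestor:
  assumes "a \<in> V" "b \<in> V"
  shows "(\<Sum>c\<in>{c \<in> V - {root}. par c = a}. if ancestor c b then 1 else 0 :: real)
       = (if ancestor a b \<and> a \<noteq> b then 1 else 0)"
proof -
  have "(\<Sum>c\<in>{c \<in> V - {root}. par c = a}. if ancestor c b then 1 else 0 :: real)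
      = real (card {c \<in> V - {root}. par c = a \<and> ancestor c b})"
    using finite_V by (simp add: sum.If_cases Int_def conj_assoc)
  also have "\<dots> = (if ancestor a b \<and> a \<noteq> b then 1 else 0)"
  proof (cases "ancestor a b \<and> a \<noteq> b")
    case True
    then obtain c where c: "c \<in> V" "c \<noteq> root" "par c = a" "ancestor c b"
      using child_ancestor_exists assms by blast
    then have "{c \<in> V - {root}. par c = a \<and> ancestor c b} = {c}"
      using child_ancestor_unique by auto
    then show ?thesis using True by simp
  next
    case False
    have "False" if c: "c \<in> V" "c \<noteq> root" "par c = a" "ancestor c b" for c
    proof -
      have "ancestor a b" using c ancestor_par ancestor_trans by blast
      with False have "a = b" by blast
      then have "ancestor c a" "ancestor a c" using c ancestor_par by auto
      then have "c = a" using ancestor_antisym c(1) by blast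
      then show False using not_ancestor_par[OF c(1,2)] c(3) ancestor_refl by simp
    qed
    then have none: "{c \<in> V - {root}. par c = a \<and> ancestor c b} = {}" by blast
    show ?thesis unfolding none using False by simp
  qed
  finally show ?thesis .
qed

lemma edge_iff: "(a, c) \<in> E \<longleftrightarrow> (a \<in> V - {root} \<and> c = par a) \<or> (c \<in> V - {root} \<and> a = par c)"
  unfolding edges_eq parent_edges_def by auto

lemma edge_in_V: "(a, c) \<in> E \<Longrightarrow> a \<in> V \<and> c \<in> V"
  using edge_iff par_closed by auto

lemma edge_irrefl: "(a, a) \<notin> E"
proof
  assume "(a, a) \<in> E"
  then have "a \<in> V" "a \<noteq> root" "par a = a" using edge_iff by auto
  then show False using not_ancestor_par ancestor_refl by metis
qed

lemma neighbours_eq: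
  "a \<in> V - {root} \<Longrightarrow> {c. (a, c) \<in> E} = insert (par a) {c \<in> V - {root}. par c = a}"
  using edge_iff by auto

subsection \<open>The inverse reduced Laplacian and phi\<close>

definition green :: "('v \<Rightarrow> real) \<Rightarrow> 'v \<Rightarrow> 'v \<Rightarrow> real" where
  "green l u d = (\<Sum>w\<in>V - {root}. if ancestor w u \<and> ancestor w d then l w else 0)"

lemma green_root_left: "green l root d = 0"
  unfolding green_def by (rule sum.neutral) (use ancestor_root_eq in auto)

lemma green_sym: "green l u d = green l d u"
  unfolding green_def by (simp add: conj_commute)

lemma green_par_diff:
  assumes "a \<in> V" "a \<noteq> root"
  shows "green l a d - green l (par a) d = (if ancestor a d then l a else 0)"
proof -
  have "green l a d - green l (par a) d
      = (\<Sum>w\<in>V - {root}. (if ancestor w a \<and> ancestor w d then l w else 0)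
                         - (if ancestor w (par a) \<and> ancestor w d then l w else 0))"
    unfolding green_def by (simp add: sum_subtractf)
  also have "\<dots> = (\<Sum>w\<in>V - {root}. if w = a then (if ancestor a d then l a else 0) else 0)"
    using ancestor_iff_par[OF assms] not_ancestor_par[OF assms] by (intro sum.cong) auto
  also have "\<dots> = (if ancestor a d then l a else 0)"
    using finite_V assms by (simp add: sum.delta)
  finally show ?thesis .
qed

lemma lap_row_sum:
  assumes "a \<in> V" "f root = 0"
  shows "(\<Sum>c\<in>V - {root}. lap E wt a c * f c) = (\<Sum>c\<in>{c. (a, c) \<in> E}. wt a c * (f a - f c))"
proof -
  let ?S = "\<Sum>c\<in>{c. (a, c) \<in> E}. wt a c"
  have nbrV: "{c \<in> V. (a, c) \<in> E} = {c. (a, c) \<in> E}" using edge_in_V by auto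
  have "(\<Sum>c\<in>V - {root}. lap E wt a c * f c) = (\<Sum>c\<in>V. lap E wt a c * f c)"
    using sum.remove[OF finite_V root_in_V, of "\<lambda>c. lap E wt a c * f c"] assms(2) by simp
  also have "\<dots> = (\<Sum>c\<in>V. (if c = a then ?S * f c else 0) - (if (a, c) \<in> E then wt a c * f c else 0))"
    by (rule sum.cong) (auto simp: lap_def edge_irrefl)
  also have "\<dots> = ?S * f a - (\<Sum>c\<in>{c. (a, c) \<in> E}. wt a c * f c)"
    using assms(1) finite_V by (simp add: sum_subtractf sum.delta sum.inter_filter[symmetric] nbrV)
  also have "\<dots> = (\<Sum>c\<in>{c. (a, c) \<in> E}. wt a c * (f a - f c))"
    by (simp add: sum_distrib_right sum_subtractf right_diff_distrib)
  finally show ?thesis .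
qed

lemma lap_green:
  assumes z: "\<And>a b. (a, b) \<in> E \<Longrightarrow> z a b \<noteq> 0 \<and> z a b = z b a"
    and a: "a \<in> V - {root}" and b: "b \<in> V - {root}"
  shows "(\<Sum>c\<in>V - {root}. lap E (\<lambda>a b. 1 / z a b) a c * green (\<lambda>w. z w (par w)) c b)
       = (if a = b then 1 else 0)"
proof -
  define l where "l w = z w (par w)" for w
  define G where "G c = green l c b" for c
  define Ch where "Ch = {c \<in> V - {root}. par c = a}"
  have nbr: "{c. (a, c) \<in> E} = insert (par a) Ch" unfolding Ch_def using neighbours_eq a by blast
  have "finite Ch" unfolding Ch_def using finite_V by simp
  moreover have "par a \<notin> Ch"
    using not_ancestor_par[of a] ancestor_par[of "par a"] a unfolding Ch_def by auto
  moreover have "G root = 0" unfolding G_def by (rule green_root_left)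
  ultimately have "(\<Sum>c\<in>V - {root}. lap E (\<lambda>a b. 1 / z a b) a c * G c)
      = (G a - G (par a)) / z a (par a) + (\<Sum>c\<in>Ch. (G a - G c) / z a c)"
    using lap_row_sum[of a G "\<lambda>a b. 1 / z a b"] a unfolding nbr by simp
  also have "\<dots> = (if ancestor a b then 1 else 0) - (\<Sum>c\<in>Ch. if ancestor c b then 1 else 0)"
  proof -
    have "(a, par a) \<in> E" using edge_iff a by auto
    then have "(G a - G (par a)) / z a (par a) = (if ancestor a b then 1 else 0)"
      unfolding G_def using green_par_diff[of a l b] a z by (simp add: l_def)
    moreover have "(G a - G c) / z a c = - (if ancestor c b then 1 else 0)" if c: "c \<in> Ch" for c
    proof -
      have cV: "c \<in> V" "c \<noteq> root" "par c = a" using c unfolding Ch_def by auto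
      then have "z a c \<noteq> 0" "z c a = z a c" using edge_iff z[of a c] by auto
      moreover have "G a - G c = - (if ancestor c b then l c else 0)"
        unfolding G_def using green_par_diff[of c l b] cV by simp
      ultimately show ?thesis using cV(3) by (simp add: l_def)
    qed
    ultimately show ?thesis by (simp add: sum_negf)
  qed
  also have "\<dots> = (if a = b then 1 else 0)"
    using sum_children_ancestor[of a b] a b ancestor_refl unfolding Ch_def by auto
  finally show ?thesis unfolding G_def l_def .
qed

lemma lap_sym:
  assumes "\<And>a b. (a, b) \<in> E \<Longrightarrow> wt a b = wt b a"
  shows "lap E wt a c = lap E wt c a"
  unfolding lap_def using assms edge_iff by auto

lemma mat_inv_lap_green:
  assumes z: "\<And>a b. (a, b) \<in> E \<Longrightarrow> z a b \<noteq> 0 \<and> z a b = z b a"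
  shows "mat_inv_on (V - {root}) (lap E (\<lambda>a b. 1 / z a b))
       = (\<lambda>u d. if u \<in> V - {root} \<and> d \<in> V - {root} then green (\<lambda>w. z w (par w)) u d else 0)"
proof -
  let ?N = "V - {root}" and ?l = "\<lambda>w. z w (par w)" and ?wt = "\<lambda>a b. 1 / z a b"
  let ?G = "\<lambda>u d. if u \<in> ?N \<and> d \<in> ?N then green ?l u d else 0"
  have right: "(\<Sum>c\<in>?N. lap E ?wt a c * ?G c b) = (if a = b then 1 else 0)"
    if "a \<in> ?N" "b \<in> ?N" for a b
  proof -
    have "(\<Sum>c\<in>?N. lap E ?wt a c * ?G c b) = (\<Sum>c\<in>?N. lap E ?wt a c * green ?l c b)"
      using that by (intro sum.cong) auto
    then show ?thesis using lap_green[of z a b, OF z that] by simp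
  qed
  have left: "(\<Sum>c\<in>?N. ?G a c * lap E ?wt c b) = (if a = b then 1 else 0)"
    if "a \<in> ?N" "b \<in> ?N" for a b
  proof -
    have "(\<Sum>c\<in>?N. ?G a c * lap E ?wt c b) = (\<Sum>c\<in>?N. lap E ?wt b c * ?G c a)"
      using that lap_sym[of ?wt] z by (intro sum.cong) (auto simp: green_sym)
    then show ?thesis using right[OF that(2,1)] by auto
  qed
  show ?thesis using finite_V right left by (intro mat_inv_on_eqI) auto
qed

lemma volt_eq_green:
  assumes r_pos: "\<forall>a b. (a, b) \<in> E \<longrightarrow> r a b > 0 \<and> r a b = r b a"
    and x_pos: "\<forall>a b. (a, b) \<in> E \<longrightarrow> x a b > 0 \<and> x a b = x b a"
    and a: "a \<in> V"
  shows "volt V root E r x p q a = (\<lambda>\<omega>. \<Sum>d\<in>V - {root}.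
           green (\<lambda>w. r w (par w)) a d * p d \<omega> + green (\<lambda>w. x w (par w)) a d * q d \<omega>)"
proof -
  have inv: "mat_inv_on (V - {root}) (lap E (\<lambda>c d. 1 / z c d)) u d
      = (if u \<in> V - {root} \<and> d \<in> V - {root} then green (\<lambda>w. z w (par w)) u d else 0)"
    if "\<forall>a b. (a, b) \<in> E \<longrightarrow> z a b > 0 \<and> z a b = z b a" for z u d
  proof -
    have "mat_inv_on (V - {root}) (lap E (\<lambda>c d. 1 / z c d))
      = (\<lambda>u d. if u \<in> V - {root} \<and> d \<in> V - {root} then green (\<lambda>w. z w (par w)) u d else 0)"
      by (rule mat_inv_lap_green) (use that in force)
    then show ?thesis by (simp add: fun_eq_iff)
  qed
  show ?thesis
  proof
    fix \<omega>
    show "volt V root E r x p q a \<omega> = (\<Sum>d\<in>V - {root}.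
           green (\<lambda>w. r w (par w)) a d * p d \<omega> + green (\<lambda>w. x w (par w)) a d * q d \<omega>)"
      unfolding volt_def inv[OF r_pos] inv[OF x_pos] using a
      by (cases "a = root") (auto simp: green_root_left intro: sum.cong)
  qed
qed

lemma phi_eq_sum_qform:
  assumes r_pos: "\<forall>a b. (a, b) \<in> E \<longrightarrow> r a b > 0 \<and> r a b = r b a"
    and x_pos: "\<forall>a b. (a, b) \<in> E \<longrightarrow> x a b > 0 \<and> x a b = x b a"
    and M: "finite_measure M"
    and sq: "\<And>d. d \<in> V - {root} \<Longrightarrow> square_integrable M (p d) \<and> square_integrable M (q d)"
    and uncorr: "\<And>d e. d \<in> V - {root} \<Longrightarrow> e \<in> V - {root} \<Longrightarrow> d \<noteq> e \<Longrightarrow>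
       covar M (p d) (p e) = 0 \<and> covar M (q d) (q e) = 0 \<and> covar M (q d) (p e) = 0"
    and ab: "a \<in> V" "b \<in> V"
  shows "phi V root E r x M p q a b
    = (\<Sum>d\<in>V - {root}. qform (covar M (p d) (p d)) (covar M (q d) (q d)) (covar M (q d) (p d))
        (green (\<lambda>w. r w (par w)) a d - green (\<lambda>w. r w (par w)) b d)
        (green (\<lambda>w. x w (par w)) a d - green (\<lambda>w. x w (par w)) b d))"
proof -
  interpret finite_measure M by (rule M)
  let ?gr = "green (\<lambda>w. r w (par w))" and ?gx = "green (\<lambda>w. x w (par w))"
  let ?Y = "\<lambda>a \<omega>. \<Sum>d\<in>V - {root}. ?gr a d * p d \<omega> + ?gx a d * q d \<omega>"
  have int: "integrable M (?Y c)" for c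
    using sq by (intro square_integrable_integrable square_integrable_sum
        square_integrable_add square_integrable_cmult) auto
  have "volt V root E r x p q a = ?Y a" "volt V root E r x p q b = ?Y b"
    using volt_eq_green[OF r_pos x_pos] ab by blast+
  then have "phi V root E r x M p q a b = covar M (\<lambda>\<omega>. ?Y a \<omega> - ?Y b \<omega>) (\<lambda>\<omega>. ?Y a \<omega> - ?Y b \<omega>)"
    unfolding phi_def Let_def by (simp only: integral_centered_diff_square[OF int int])
  also have "(\<lambda>\<omega>. ?Y a \<omega> - ?Y b \<omega>)
      = (\<lambda>\<omega>. \<Sum>d\<in>V - {root}. (?gr a d - ?gr b d) * p d \<omega> + (?gx a d - ?gx b d) * q d \<omega>)"
    by (simp add: sum_subtractf[symmetric] algebra_simps)
  also have "covar M \<dots> \<dots> = (\<Sum>d\<in>V - {root}. qform (covar M (p d) (p d)) (covar M (q d) (q d))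
      (covar M (q d) (p d)) (?gr a d - ?gr b d) (?gx a d - ?gx b d))"
    by (rule covar_self_sum_uncorrelated) (simp_all add: finite_V sq uncorr)
  finally show ?thesis .
qed

text \<open>c lies on the tree path between a and b.\<close>
definition between :: "'v \<Rightarrow> 'v \<Rightarrow> 'v \<Rightarrow> bool" where
  "between a b c \<longleftrightarrow> (ancestor c a \<or> ancestor c b) \<and> (\<forall>w. ancestor w a \<and> ancestor w b \<longrightarrow> ancestor w c)"

lemma between_ends: "between a b a" "between a b b"
  unfolding between_def by (auto simp: ancestor_refl)

lemma between_sym: "between a b c \<longleftrightarrow> between b a c"
  unfolding between_def by blast

lemma between_in_V: "a \<in> V \<Longrightarrow> b \<in> V \<Longrightarrow> between a b c \<Longrightarrow> c \<in> V"
  unfolding between_def using ancestor_in_V by blast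

lemma between_par_left: "ancestor b (par a) \<Longrightarrow> between (par a) b c \<Longrightarrow> between a b c"
  unfolding between_def using ancestor_par ancestor_trans by blast

lemma between_par_right:
  assumes "b \<in> V" "b \<noteq> root" "\<not> ancestor b a" "between a (par b) c"
  shows "between a b c"
  using assms ancestor_iff_par[OF assms(1,2)] ancestor_par ancestor_trans
  unfolding between_def by metis

lemma path_between_Cons:
  assumes a: "a \<in> V" "a \<noteq> root" and ab: "a \<noteq> b" "ancestor b a"
    and ys: "is_path E ys" "hd ys = par a" "last ys = b" "\<forall>c\<in>set ys. between (par a) b c"
  shows "is_path E (a # ys) \<and> hd (a # ys) = a \<and> last (a # ys) = b
    \<and> (\<forall>c\<in>set (a # ys). between a b c)"
proof -
  have ba: "ancestor b (par a)" using ab ancestor_iff_par[OF a] by auto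
  have "ys \<noteq> []" using ys(1) unfolding is_path_def by simp
  moreover have "a \<notin> set ys"
  proof
    assume "a \<in> set ys"
    then have "ancestor a (par a) \<or> ancestor a b" using ys(4) unfolding between_def by blast
    then show False using not_ancestor_par[OF a] ab ancestor_antisym a(1) by blast
  qed
  moreover have "(a, hd ys) \<in> E" using ys(2) edge_iff a by auto
  ultimately show ?thesis
    using is_path_Cons[OF ys(1)] ys between_par_left[OF ba] between_ends by auto
qed

lemma path_between_snoc:
  assumes b: "b \<in> V" "b \<noteq> root" and ba: "\<not> ancestor b a"
    and ys: "is_path E ys" "hd ys = a" "last ys = par b" "\<forall>c\<in>set ys. between a (par b) c"
  shows "is_path E (ys @ [b]) \<and> hd (ys @ [b]) = a \<and> last (ys @ [b]) = b
    \<and> (\<forall>c\<in>set (ys @ [b]). between a b c)"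
proof -
  have "ys \<noteq> []" using ys(1) unfolding is_path_def by simp
  moreover have "b \<notin> set ys"
  proof
    assume "b \<in> set ys"
    then have "ancestor b a \<or> ancestor b (par b)" using ys(4) unfolding between_def by blast
    then show False using not_ancestor_par[OF b] ba by blast
  qed
  moreover have "(last ys, b) \<in> E" using ys(3) edge_iff b by auto
  ultimately show ?thesis
    using is_path_snoc[OF ys(1)] ys between_par_right[OF b ba] between_ends by auto
qed

lemma path_between:
  assumes "a \<in> V" "b \<in> V"
  shows "\<exists>xs. is_path E xs \<and> hd xs = a \<and> last xs = b \<and> (\<forall>c\<in>set xs. between a b c)"
  using assms
proof (induction "dep a + dep b" arbitrary: a b rule: less_induct)
  case less
  consider "a = b" | "a \<noteq> b" "ancestor b a" | "\<not> ancestor b a" by blast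
  then show ?case
  proof cases
    case 1
    then show ?thesis using is_path_single[of E a] between_ends by auto
  next
    case 2
    then have a: "a \<noteq> root" using ancestor_root_eq by blast
    obtain ys where "is_path E ys" "hd ys = par a" "last ys = b" "\<forall>c\<in>set ys. between (par a) b c"
      using less.hyps[of "par a" b] dep_par[OF less.prems(1) a] par_in_V[OF less.prems(1) a]
        less.prems(2) by auto
    from path_between_Cons[OF less.prems(1) a 2 this] show ?thesis by blast
  next
    case 3
    then have b: "b \<noteq> root" using root_ancestor less.prems(1) by blast
    obtain ys where "is_path E ys" "hd ys = a" "last ys = par b" "\<forall>c\<in>set ys. between a (par b) c"
      using less.hyps[of a "par b"] dep_par[OF less.prems(2) b] par_in_V[OF less.prems(2) b]
        less.prems(1) by auto
    from path_between_snoc[OF less.prems(2) b 3 this] show ?thesis by blast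
  qed
qed

text \<open>The edge from w to par w lies on the tree path between a and b iff edge_sign a b w is
  nonzero; the sign records the orientation of the edge along the path.\<close>
definition edge_sign :: "'v \<Rightarrow> 'v \<Rightarrow> 'v \<Rightarrow> real" where
  "edge_sign a b w = (if ancestor w a then 1 else 0) - (if ancestor w b then 1 else 0)"

lemma edge_sign_swap: "edge_sign b a w = - edge_sign a b w"
  unfolding edge_sign_def by simp

lemma edge_sign_parent:
  assumes "b \<in> V" "b \<noteq> root"
  shows "edge_sign (par b) b w = (if w = b then -1 else 0)"
  using ancestor_iff_par[OF assms, of w] not_ancestor_par[OF assms] ancestor_refl[of b]
  unfolding edge_sign_def by auto

lemma edge_sign_uniform:
  obtains \<sigma> :: real where "\<sigma> = 1 \<or> \<sigma> = -1" "\<And>w. ancestor w d \<Longrightarrow> 0 \<le> \<sigma> * edge_sign a b w"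
proof (cases "\<exists>w. ancestor w d \<and> edge_sign a b w < 0")
  case True
  then obtain w1 where w1: "ancestor w1 d" "ancestor w1 b" "\<not> ancestor w1 a"
    unfolding edge_sign_def by (auto split: if_splits)
  have "\<not> (ancestor w a \<and> \<not> ancestor w b)" if "ancestor w d" for w
    using ancestor_linear[OF w1(1) that] w1(2,3) ancestor_trans by blast
  then have "0 \<le> - edge_sign a b w" if "ancestor w d" for w
    using that unfolding edge_sign_def by auto
  then show ?thesis using that[of "-1"] by simp
next
  case False
  then show ?thesis using that[of 1] by (simp add: not_less)
qed

lemma scaled_green_diff:
  "\<sigma> * (green l a d - green l b d)
     = (\<Sum>w\<in>V - {root}. if ancestor w d then l w * (\<sigma> * edge_sign a b w) else 0)"
  unfolding green_def edge_sign_def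
  by (simp add: sum_subtractf[symmetric] sum_distrib_left) (rule sum.cong, auto)

lemma green_diff_mono:
  assumes l: "\<And>w. w \<in> V - {root} \<Longrightarrow> 0 < l w"
    and sub: "\<And>w. w \<in> V - {root} \<Longrightarrow> edge_sign a' b' w \<noteq> 0 \<Longrightarrow> edge_sign a b w = edge_sign a' b' w"
    and \<sigma>: "\<And>w. ancestor w d \<Longrightarrow> 0 \<le> \<sigma> * edge_sign a b w"
  shows "0 \<le> \<sigma> * (green l a' d - green l b' d)"
    and "\<sigma> * (green l a' d - green l b' d) \<le> \<sigma> * (green l a d - green l b d)"
    and "\<sigma> \<noteq> 0 \<Longrightarrow> d \<in> V - {root} \<Longrightarrow> edge_sign a b d \<noteq> 0 \<Longrightarrow> edge_sign a' b' d = 0 \<Longrightarrow>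
         \<sigma> * (green l a' d - green l b' d) < \<sigma> * (green l a d - green l b d)"
proof -
  have bounds: "0 \<le> \<sigma> * edge_sign a' b' w \<and> \<sigma> * edge_sign a' b' w \<le> \<sigma> * edge_sign a b w"
    if "w \<in> V - {root}" "ancestor w d" for w
    using \<sigma>[OF that(2)] sub[OF that(1)] by (cases "edge_sign a' b' w = 0") auto
  then have term_bounds: "0 \<le> l w * (\<sigma> * edge_sign a' b' w)
      \<and> l w * (\<sigma> * edge_sign a' b' w) \<le> l w * (\<sigma> * edge_sign a b w)"
    if "w \<in> V - {root}" "ancestor w d" for w
    using l[OF that(1)] that by (simp add: mult_left_mono)
  show "0 \<le> \<sigma> * (green l a' d - green l b' d)"
    unfolding scaled_green_diff by (intro sum_nonneg) (use term_bounds in auto)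
  show "\<sigma> * (green l a' d - green l b' d) \<le> \<sigma> * (green l a d - green l b d)"
    unfolding scaled_green_diff by (intro sum_mono) (use term_bounds in auto)
  assume d: "\<sigma> \<noteq> 0" "d \<in> V - {root}" "edge_sign a b d \<noteq> 0" "edge_sign a' b' d = 0"
  have "0 < \<sigma> * edge_sign a b d"
    using \<sigma>[OF ancestor_refl] d(1,3) by (simp add: order_less_le)
  then show "\<sigma> * (green l a' d - green l b' d) < \<sigma> * (green l a d - green l b d)"
    unfolding scaled_green_diff using term_bounds l[OF d(2)] d(2,4) finite_V ancestor_refl[of d]
    by (intro sum_strict_mono_ex1) (auto intro!: bexI[of _ d])
qed

lemma ancestors_eq_imp_eq:
  assumes "x \<in> V" "y \<in> V" "\<And>w. w \<in> V - {root} \<Longrightarrow> ancestor w x \<longleftrightarrow> ancestor w y"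
  shows "x = y"
  using assms ancestor_refl ancestor_root_eq ancestor_antisym by (metis Diff_iff singletonD)

lemma cut_pair_witness:
  assumes b: "b \<in> V" "b \<noteq> root" and uv: "u \<in> V" "v \<in> V" "\<not> ancestor b u" "ancestor b v"
    and ne: "(u, v) \<noteq> (par b, b)"
  shows "\<exists>w\<in>V - {root}. w \<noteq> b \<and> edge_sign u v w \<noteq> 0"
proof (rule ccontr)
  assume "\<not> ?thesis"
  then have same: "ancestor w u \<longleftrightarrow> ancestor w v" if "w \<in> V - {root}" "w \<noteq> b" for w
    using that unfolding edge_sign_def by (auto split: if_splits)
  have "v = b"
  proof (rule ccontr)
    assume "v \<noteq> b"
    moreover have "v \<noteq> root" using uv(4) b(2) ancestor_root_eq by blast
    ultimately have "ancestor v u" using same[of v] uv(2) ancestor_refl by blast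
    then show False using uv(3,4) ancestor_trans by blast
  qed
  moreover have "u = par b"
  proof (rule ancestors_eq_imp_eq[OF uv(1) par_in_V[OF b]])
    fix w
    assume w: "w \<in> V - {root}"
    show "ancestor w u \<longleftrightarrow> ancestor w (par b)"
    proof (cases "w = b")
      case True
      then show ?thesis using uv(3) not_ancestor_par[OF b] by simp
    next
      case False
      then show ?thesis using same[OF w False] \<open>v = b\<close> ancestor_iff_par[OF b, of w] by simp
    qed
  qed
  ultimately show False using ne by simp
qed

lemma between_edge_sign:
  assumes "between a b c"
  shows "edge_sign a c w \<noteq> 0 \<Longrightarrow> edge_sign a b w = edge_sign a c w"
    and "edge_sign c b w \<noteq> 0 \<Longrightarrow> edge_sign a b w = edge_sign c b w"
proof -
  have left: "edge_sign x y w = edge_sign x c w"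
    if "between x y c" "edge_sign x c w \<noteq> 0" for x y
  proof -
    from that(2) consider "ancestor w x" "\<not> ancestor w c" | "\<not> ancestor w x" "ancestor w c"
      unfolding edge_sign_def by (auto split: if_splits)
    then show ?thesis
    proof cases
      case 1
      then have "\<not> ancestor w y" using that(1) unfolding between_def by blast
      then show ?thesis using 1 unfolding edge_sign_def by simp
    next
      case 2
      then have "\<not> ancestor c x" using ancestor_trans by blast
      then have "ancestor w y" using 2 that(1) ancestor_trans unfolding between_def by blast
      then show ?thesis using 2 unfolding edge_sign_def by simp
    qed
  qed
  show "edge_sign a c w \<noteq> 0 \<Longrightarrow> edge_sign a b w = edge_sign a c w"
    using left[OF assms] .
  show "edge_sign c b w \<noteq> 0 \<Longrightarrow> edge_sign a b w = edge_sign c b w"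
    using left[of b a] assms between_sym edge_sign_swap
    by (metis neg_equal_iff_equal neg_equal_0_iff_equal)
qed

lemma between_witness:
  assumes "a \<in> V" "b \<in> V" "between a b c" "c \<noteq> a" "c \<noteq> b"
  shows "\<exists>w\<in>V - {root}. edge_sign a b w \<noteq> 0 \<and> edge_sign a c w = 0"
proof (cases "ancestor c b")
  case True
  have "\<not> ancestor b a" "\<not> ancestor b c"
    using assms(2,3,5) True ancestor_antisym ancestor_refl unfolding between_def by blast+
  moreover have "b \<noteq> root" using True assms(5) ancestor_root_eq by blast
  ultimately show ?thesis
    using assms(2) ancestor_refl[of b] unfolding edge_sign_def by (intro bexI[of _ b]) auto
next
  case False
  then have "ancestor c a" using assms(3) unfolding between_def by blast
  moreover have "c \<noteq> root" using False root_ancestor assms(2) by blast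
  moreover have "c \<in> V" using between_in_V assms(1-3) by blast
  ultimately show ?thesis
    using False ancestor_refl[of c] unfolding edge_sign_def by (intro bexI[of _ c]) auto
qed

subsection \<open>Minimum spanning trees of the observed nodes\<close>

lemma mst_contains_parent_edge:
  assumes mst: "is_mst (V - S) w F" and w_sym: "\<And>a b. w a b = w b a"
    and cheapest: "\<And>b u v. b \<in> V - {root} \<Longrightarrow> u \<in> V \<Longrightarrow> v \<in> V \<Longrightarrow> \<not> ancestor b u \<Longrightarrow> ancestor b v
        \<Longrightarrow> (u, v) \<noteq> (par b, b) \<Longrightarrow> w (par b) b < w u v"
    and b: "b \<in> V - {root}" "b \<notin> S" "par b \<notin> S"
  shows "(par b, b) \<in> F"
proof (rule ccontr)
  assume notF: "(par b, b) \<notin> F"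
  have F: "connected_on (V - S) F" "F \<subseteq> (V - S) \<times> (V - S)"
    using mst unfolding is_mst_def is_tree_def ugraph_def by blast+
  have "(par b, b) \<in> F\<^sup>*"
    using F(1) b par_in_V unfolding connected_on_def by blast
  then obtain x y where xy: "(x, y) \<in> F" "\<not> ancestor b x" "ancestor b y"
    "(par b, x) \<in> (F - {(x, y), (y, x)})\<^sup>*" "(y, b) \<in> (F - {(x, y), (y, x)})\<^sup>*"
    using rtrancl_crossing_edge[of "par b" b F "{v. ancestor b v}"] not_ancestor_par b ancestor_refl
    by auto
  have "w (par b) b < w x y"
    using cheapest b(1) xy(1-3) F(2) notF by blast
  moreover have "w x y \<le> w (par b) b"
    using mst_cycle_le[OF mst w_sym xy(1,4,5)] .
  ultimately show False by simp
qed

lemma mst_contains_tree_edge: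
  assumes mst: "is_mst (V - S) w F" and w_sym: "\<And>a b. w a b = w b a"
    and cheapest: "\<And>b u v. b \<in> V - {root} \<Longrightarrow> u \<in> V \<Longrightarrow> v \<in> V \<Longrightarrow> \<not> ancestor b u \<Longrightarrow> ancestor b v
        \<Longrightarrow> (u, v) \<noteq> (par b, b) \<Longrightarrow> w (par b) b < w u v"
    and e: "(a, c) \<in> E" "a \<notin> S" "c \<notin> S"
  shows "(a, c) \<in> F"
proof -
  have parent_edge: "(par b, b) \<in> F" if "b \<in> V - {root}" "b \<notin> S" "par b \<notin> S" for b
    using mst w_sym cheapest that by (rule mst_contains_parent_edge)
  from e(1) consider "a \<in> V - {root}" "c = par a" | "c \<in> V - {root}" "a = par c"
    using edge_iff by blast
  then show ?thesis
  proof cases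
    case 1
    then have "(c, a) \<in> F" using parent_edge e by auto
    moreover have "sym F" using mst unfolding is_mst_def is_tree_def ugraph_def by blast
    ultimately show ?thesis by (auto dest: symD)
  next
    case 2
    then show ?thesis using parent_edge e by auto
  qed
qed

lemma mst_edge_separated:
  assumes mst: "is_mst (V - S) w F" and w_sym: "\<And>a b. w a b = w b a"
    and shortcut: "\<And>a b c. a \<in> V \<Longrightarrow> b \<in> V \<Longrightarrow> between a b c \<Longrightarrow> c \<noteq> a \<Longrightarrow> c \<noteq> b
        \<Longrightarrow> w a c < w a b \<and> w c b < w a b"
    and ab: "(a, b) \<in> F"
  shows "separated_by E S a b"
proof -
  have F: "connected_on (V - S) F" "F \<subseteq> (V - S) \<times> (V - S)" "sym F"
    using mst unfolding is_mst_def is_tree_def ugraph_def by blast+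
  then have abV: "a \<in> V - S" "b \<in> V - S" using ab by auto
  obtain xs where xs: "is_path E xs" "hd xs = a" "last xs = b" "\<forall>c\<in>set xs. between a b c"
    using path_between abV by blast
  have "c \<in> S" if c: "c \<in> set (butlast (tl xs))" for c
  proof (rule ccontr)
    assume "c \<notin> S"
    have "c \<noteq> a" "c \<noteq> b" "between a b c"
      using interior_neq_hd_last[of xs c] xs c unfolding is_path_def by auto
    moreover have "c \<in> V" using between_in_V abV \<open>between a b c\<close> by blast
    ultimately have lt: "w a c < w a b" "w c b < w a b" using shortcut abV by auto
    have sym0: "sym (F - {(a, b), (b, a)})" using F(3) unfolding sym_def by blast
    have "(a, c) \<in> F\<^sup>*" using F(1) abV \<open>c \<in> V\<close> \<open>c \<notin> S\<close> unfolding connected_on_def by blast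
    from rtrancl_remove_edge[OF this, of b] show False
    proof
      assume "(a, c) \<in> (F - {(a, b), (b, a)})\<^sup>*"
      then have "w a b \<le> w c b"
        using mst_cycle_le[OF mst w_sym ab] symD[OF sym_rtrancl[OF sym0]] by blast
      then show False using lt by simp
    next
      assume "(b, c) \<in> (F - {(a, b), (b, a)})\<^sup>*"
      then have "w a b \<le> w a c" using mst_cycle_le[OF mst w_sym ab] by blast
      then show False using lt by simp
    qed
  qed
  then show ?thesis unfolding separated_by_def using xs by blast
qed

end

lemma is_tree_rooted:
  fixes root :: 'v
  assumes tree: "is_tree V E" and root: "root \<in> V"
  obtains par and dep :: "'v \<Rightarrow> nat" where "rooted_tree V E root par dep"
proof -
  from tree have fin: "finite V" and ug: "ugraph V E" and con: "connected_on V E"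
    and card: "card E = 2 * (card V - 1)" unfolding is_tree_def by blast+
  obtain par0 and dep :: "'v \<Rightarrow> nat"
    where dep_root: "dep root = 0"
      and pd: "\<And>v. v \<in> V - {root} \<Longrightarrow> par0 v \<in> V \<and> (v, par0 v) \<in> E \<and> dep v = Suc (dep (par0 v))"
    using connected_parent_function[OF ug con root] by blast
  define par where "par v = (if v = root then root else par0 v)" for v
  have sub: "parent_edges V root par \<subseteq> E"
    using pd ug unfolding parent_edges_def ugraph_def par_def by (auto dest: symD)
  have "card (parent_edges V root par) = card E"
    using card_parent_edges[of V root dep par] fin root pd card unfolding par_def by simp
  then have "E = parent_edges V root par"
    using card_subset_eq[OF ugraph_finite[OF fin ug] sub] by simp
  then have "rooted_tree V E root par dep"
    using fin root dep_root pd unfolding rooted_tree_def par_def by auto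
  then show ?thesis by (rule that)
qed

section \<open>Monotonicity of phi along tree paths\<close>

lemma phi_sym: "phi V rt E r x M p q a b = phi V rt E r x M p q b a"
  unfolding phi_def Let_def by (simp add: power2_commute)

text \<open>lr w and lx w are the resistance and reactance of the edge from w to par w; P d, Q d and
  R d are the variance of p_d, the variance of q_d and the covariance of q_d with p_d.\<close>
locale lcpf_tree = rooted_tree V E root par dep
  for V :: "'v set" and E root par and dep :: "'v \<Rightarrow> nat" +
  fixes lr lx P Q R :: "'v \<Rightarrow> real"
  assumes lr_pos: "\<And>w. w \<in> V - {root} \<Longrightarrow> 0 < lr w"
    and lx_pos: "\<And>w. w \<in> V - {root} \<Longrightarrow> 0 < lx w"
    and P_nonneg: "\<And>d. d \<in> V - {root} \<Longrightarrow> 0 \<le> P d"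
    and Q_nonneg: "\<And>d. d \<in> V - {root} \<Longrightarrow> 0 \<le> Q d"
    and R_nonneg: "\<And>d. d \<in> V - {root} \<Longrightarrow> 0 \<le> R d"
    and PQ_pos: "\<And>d. d \<in> V - {root} \<Longrightarrow> 0 < P d + Q d"
begin

definition tree_phi :: "'v \<Rightarrow> 'v \<Rightarrow> real" where
  "tree_phi a b = (\<Sum>d\<in>V - {root}. qform (P d) (Q d) (R d)
      (green lr a d - green lr b d) (green lx a d - green lx b d))"

lemma tree_phi_sym: "tree_phi a b = tree_phi b a"
  unfolding tree_phi_def by (intro sum.cong refl qform_swap)

lemma tree_phi_strict_mono:
  assumes sub: "\<And>w. w \<in> V - {root} \<Longrightarrow> edge_sign a' b' w \<noteq> 0 \<Longrightarrow> edge_sign a b w = edge_sign a' b' w"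
    and w0: "w0 \<in> V - {root}" "edge_sign a b w0 \<noteq> 0" "edge_sign a' b' w0 = 0"
  shows "tree_phi a' b' < tree_phi a b"
proof -
  let ?t = "\<lambda>a b d. qform (P d) (Q d) (R d)
    (green lr a d - green lr b d) (green lx a d - green lx b d)"
  have "?t a' b' d \<le> ?t a b d \<and> (d = w0 \<longrightarrow> ?t a' b' d < ?t a b d)" if d: "d \<in> V - {root}" for d
  proof -
    obtain \<sigma> :: real where \<sigma>: "\<sigma> = 1 \<or> \<sigma> = -1" "\<And>w. ancestor w d \<Longrightarrow> 0 \<le> \<sigma> * edge_sign a b w"
      using edge_sign_uniform[where d = d and a = a and b = b] by blast
    let ?r' = "\<sigma> * (green lr a' d - green lr b' d)" and ?r = "\<sigma> * (green lr a d - green lr b d)"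
    let ?x' = "\<sigma> * (green lx a' d - green lx b' d)" and ?x = "\<sigma> * (green lx a d - green lx b d)"
    have r1: "0 \<le> ?r'" using lr_pos sub \<sigma>(2) by (rule green_diff_mono(1))
    have r2: "?r' \<le> ?r" using lr_pos sub \<sigma>(2) by (rule green_diff_mono(2))
    have x1: "0 \<le> ?x'" using lx_pos sub \<sigma>(2) by (rule green_diff_mono(1))
    have x2: "?x' \<le> ?x" using lx_pos sub \<sigma>(2) by (rule green_diff_mono(2))
    have signed: "?t a' b' d = qform (P d) (Q d) (R d) ?r' ?x'"
      "?t a b d = qform (P d) (Q d) (R d) ?r ?x"
      using qform_sign[OF \<sigma>(1)] by simp_all
    have "qform (P d) (Q d) (R d) ?r' ?x' \<le> qform (P d) (Q d) (R d) ?r ?x"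
      using r1 r2 x1 x2 P_nonneg[OF d] Q_nonneg[OF d] R_nonneg[OF d] by (rule qform_mono)
    moreover have "qform (P d) (Q d) (R d) ?r' ?x' < qform (P d) (Q d) (R d) ?r ?x" if "d = w0"
    proof -
      have \<sigma>0: "\<sigma> \<noteq> 0" using \<sigma>(1) by auto
      note w0d = w0[folded that]
      have "?r' < ?r" using lr_pos sub \<sigma>(2) \<sigma>0 w0d by (rule green_diff_mono(3))
      moreover have "?x' < ?x" using lx_pos sub \<sigma>(2) \<sigma>0 w0d by (rule green_diff_mono(3))
      ultimately show ?thesis
        using r1 x1 P_nonneg[OF d] Q_nonneg[OF d] R_nonneg[OF d] PQ_pos[OF d]
        by (intro qform_strict_mono) auto
    qed
    ultimately show ?thesis unfolding signed by blast
  qed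
  then show ?thesis
    unfolding tree_phi_def using w0(1) finite_V by (intro sum_strict_mono_ex1) auto
qed

lemma tree_phi_parent_edge_less:
  assumes b: "b \<in> V - {root}" and uv: "u \<in> V" "v \<in> V" "\<not> ancestor b u" "ancestor b v"
    and ne: "(u, v) \<noteq> (par b, b)"
  shows "tree_phi (par b) b < tree_phi u v"
proof -
  have b': "b \<in> V" "b \<noteq> root" using b by auto
  obtain w0 where "w0 \<in> V - {root}" "w0 \<noteq> b" "edge_sign u v w0 \<noteq> 0"
    using cut_pair_witness[OF b' uv ne] by blast
  moreover have "edge_sign u v b = -1" using uv(3,4) unfolding edge_sign_def by simp
  ultimately show ?thesis
    using edge_sign_parent[OF b'] by (intro tree_phi_strict_mono[of "par b" b u v w0]) auto
qed

lemma tree_phi_between_less: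
  assumes "a \<in> V" "b \<in> V" "between a b c" "c \<noteq> a" "c \<noteq> b"
  shows "tree_phi a c < tree_phi a b" and "tree_phi c b < tree_phi a b"
proof -
  have left: "tree_phi x c < tree_phi x y"
    if xy: "x \<in> V" "y \<in> V" "between x y c" "c \<noteq> x" "c \<noteq> y" for x y
  proof -
    obtain w0 where "w0 \<in> V - {root}" "edge_sign x y w0 \<noteq> 0" "edge_sign x c w0 = 0"
      using between_witness[OF xy] by blast
    then show ?thesis
      using between_edge_sign(1)[OF xy(3)] by (intro tree_phi_strict_mono[of x c x y w0]) auto
  qed
  show "tree_phi a c < tree_phi a b" using left assms by blast
  show "tree_phi c b < tree_phi a b"
    using left[of b a] assms between_sym tree_phi_sym by metis
qed

lemma tree_phi_mst_contains_tree_edge: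
  assumes mst: "is_mst (V - S) w F" and w_sym: "\<And>a b. w a b = w b a"
    and w_eq: "\<And>a b. a \<in> V \<Longrightarrow> b \<in> V \<Longrightarrow> w a b = tree_phi a b"
    and e: "(a, c) \<in> E" "a \<notin> S" "c \<notin> S"
  shows "(a, c) \<in> F"
proof -
  have "w (par b) b < w u v"
    if "b \<in> V - {root}" "u \<in> V" "v \<in> V" "\<not> ancestor b u" "ancestor b v" "(u, v) \<noteq> (par b, b)"
    for b u v
  proof -
    have "par b \<in> V" "b \<in> V" using that(1) par_closed by auto
    then show ?thesis
      using tree_phi_parent_edge_less[OF that] w_eq[of "par b" b] w_eq[OF that(2,3)] by linarith
  qed
  with mst w_sym show ?thesis using e by (rule mst_contains_tree_edge)
qed

lemma tree_phi_mst_edge_separated: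
  assumes mst: "is_mst (V - S) w F" and w_sym: "\<And>a b. w a b = w b a"
    and w_eq: "\<And>a b. a \<in> V \<Longrightarrow> b \<in> V \<Longrightarrow> w a b = tree_phi a b"
    and ab: "(a, b) \<in> F"
  shows "separated_by E S a b"
proof -
  have "w a c < w a b \<and> w c b < w a b"
    if "a \<in> V" "b \<in> V" "between a b c" "c \<noteq> a" "c \<noteq> b" for a b c
  proof -
    have "c \<in> V" using that(1-3) by (rule between_in_V)
    then show ?thesis
      using tree_phi_between_less[OF that] w_eq[of a c] w_eq[of c b] w_eq[OF that(1,2)] that(1,2)
      by linarith
  qed
  with mst w_sym show ?thesis using ab by (rule mst_edge_separated)
qed

end

lemma (in rooted_tree) lcpf_tree_covar:
  assumes r_pos: "\<forall>a b. (a, b) \<in> E \<longrightarrow> r a b > 0 \<and> r a b = r b a"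
    and x_pos: "\<forall>a b. (a, b) \<in> E \<longrightarrow> x a b > 0 \<and> x a b = x b a"
    and cov_qp: "\<forall>a\<in>V - {root}. covar M (q a) (p a) \<ge> 0"
    and var_pos: "\<forall>c\<in>V - {root}. covar M (p c) (p c) + covar M (q c) (q c) > 0"
  shows "lcpf_tree V E root par dep (\<lambda>w. r w (par w)) (\<lambda>w. x w (par w))
    (\<lambda>d. covar M (p d) (p d)) (\<lambda>d. covar M (q d) (q d)) (\<lambda>d. covar M (q d) (p d))"
proof (intro lcpf_tree.intro lcpf_tree_axioms.intro rooted_tree_axioms)
  fix w
  assume w: "w \<in> V - {root}"
  then have "(w, par w) \<in> E" using edge_iff by auto
  then show "0 < r w (par w)" "0 < x w (par w)" using r_pos x_pos by blast+
  show "0 \<le> covar M (p w) (p w)" "0 \<le> covar M (q w) (q w)" by (rule covar_self_nonneg)+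
  show "0 \<le> covar M (q w) (p w)" using cov_qp w by blast
  show "0 < covar M (p w) (p w) + covar M (q w) (q w)" using var_pos w by blast
qed

theorem theorem4:
  fixes V :: "'v set" and E :: "('v \<times> 'v) set" and root :: 'v
    and r x :: "'v \<Rightarrow> 'v \<Rightarrow> real"
    and M :: "'w measure" and p q :: "'v \<Rightarrow> 'w \<Rightarrow> real"
    and Mis :: "'v set" and F :: "('v \<times> 'v) set"
  assumes tree: "is_tree V E"
    and root: "root \<in> V" "degree E root = 1"
    and r_pos: "\<forall>a b. (a, b) \<in> E \<longrightarrow> r a b > 0 \<and> r a b = r b a"
    and x_pos: "\<forall>a b. (a, b) \<in> E \<longrightarrow> x a b > 0 \<and> x a b = x b a"
    and prob: "prob_space M"
    and rv: "\<forall>a\<in>V - {root}. p a \<in> borel_measurable M \<and> q a \<in> borel_measurable M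
               \<and> integrable M (\<lambda>\<omega>. (p a \<omega>)\<^sup>2) \<and> integrable M (\<lambda>\<omega>. (q a \<omega>)\<^sup>2)"
    and cov_offdiag: "\<forall>a\<in>V - {root}. \<forall>b\<in>V - {root}. a \<noteq> b \<longrightarrow>
               covar M (p a) (p b) = 0 \<and> covar M (q a) (q b) = 0 \<and> covar M (q a) (p b) = 0"
    and cov_qp_diag: "\<forall>a\<in>V - {root}. covar M (q a) (p a) \<ge> 0"
    and var_pos: "\<forall>c\<in>V - {root}. covar M (p c) (p c) + covar M (q c) (q c) > 0"
    and missing: "Mis \<subseteq> V - {root}" "\<forall>c\<in>Mis. degree E c \<le> 2"
    and mst: "is_mst (V - Mis) (phi V root E r x M p q) F"
  shows "(\<forall>a\<in>V - Mis. \<forall>b\<in>V - Mis. (a, b) \<in> E \<longrightarrow> (a, b) \<in> F)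
       \<and> (\<forall>(a, b)\<in>F. (a, b) \<notin> E \<longrightarrow> separated_by E Mis a b)"
proof -
  obtain par and dep :: "'v \<Rightarrow> nat" where "rooted_tree V E root par dep"
    using is_tree_rooted[OF tree root(1)] by blast
  then interpret T: rooted_tree V E root par dep .
  interpret L: lcpf_tree V E root par dep "\<lambda>w. r w (par w)" "\<lambda>w. x w (par w)"
      "\<lambda>d. covar M (p d) (p d)" "\<lambda>d. covar M (q d) (q d)" "\<lambda>d. covar M (q d) (p d)"
    by (rule T.lcpf_tree_covar[OF r_pos x_pos cov_qp_diag var_pos])
  have phi: "phi V root E r x M p q a b = L.tree_phi a b" if "a \<in> V" "b \<in> V" for a b
    unfolding L.tree_phi_def
    by (rule T.phi_eq_sum_qform[OF r_pos x_pos prob_space.finite_measure[OF prob] _ _ that])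
      (use rv cov_offdiag in \<open>auto simp: square_integrable_def\<close>)
  have "(a, c) \<in> F" if "a \<in> V - Mis" "c \<in> V - Mis" "(a, c) \<in> E" for a c
    using mst phi_sym phi that(3) by (rule L.tree_phi_mst_contains_tree_edge) (use that in auto)
  moreover have "separated_by E Mis a b" if "(a, b) \<in> F" for a b
    using mst phi_sym phi that by (rule L.tree_phi_mst_edge_separated)
  ultimately show ?thesis by blast
qed

end
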